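(* Let $D$ be an integral domain and $\star$ a semistar operation on $D$. The following are equivalent: (i) $D$ is a P$\star$MD; (ii) for every overring $T$ of $D$ and every semistar operation $\star'$ on $T$ such that $T$ is $(\star,\star')$-linked to $D$, $T$ is $(\star,\star')$-flat over $D$; (iii) for every overring $T$ of $D$, $T$ is $(\star,\ell_{\star,T})$-flat over $D$; (iv) every overring of $D$ that is $t$-linked to $(D,\star)$ is $t$-flat over $(D,\star)$; (v) every overring $T$ of $D$ that is $(\star,d_T)$-linked to $D$ is $(\star,d_T)$-flat over $D$.
   Context: Let $D$ be an integral domain with quotient field $K$. $\overline{\mathbf F}(D)$ denotes the set of all nonzero $D$-submodules of $K$ and $\mathbf f(D)$ the set of nonzero finitely generated $D$-submodules of $K$. A semistar operation on $D$ is a map $\star:\overline{\mathbf F}(D)\to\overline{\mathbf F}(D)$, $E\mapsto E^\star$, such that for all $0\ne x\in K$ and $E,F\in\overline{\mathbf F}(D)$: (1) $(xE)^\star=xE^\star$; (2) $E\subseteq F\Rightarrow E^\star\subseteq F^\star$; (3) $E\subseteq E^\star$ and $(E^\star)^\star=E^\star$. $\star_f$ is defined by $E^{\star_f}=\bigcup\{F^\star:F\in\mathbf f(D),F\subseteq E\}$. A nonzero ideal $I$ of $D$ is a quasi-$\star$-ideal if $I^\star\cap D=I$; a quasi-$\star$-prime is a prime quasi-$\star$-ideal. An overring of $D$ is a ring $T$ with $D\subseteq T\subseteq K$; the same notions are defined on $T$. $d_T$ is the identity operation on $T$; $v_T$ is $E\mapsto(T:_K(T:_KE))$ and $t_T:=(v_T)_f$.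 $T$ is $(\star,\star')$-linked to $D$ if for every nonzero finitely generated ideal $F\subseteq D$ with $F^\star=D^\star$ one has $(FT)^{\star'}=T^{\star'}$; $T$ is $t$-linked to $(D,\star)$ if it is $(\star,t_T)$-linked to $D$. $T$ is $(\star,\star')$-flat over $D$ if it is $(\star,\star')$-linked to $D$ and $D_{Q\cap D}=T_Q$ for every quasi-$\star'_f$-prime ideal $Q$ of $T$; $T$ is $t$-flat over $(D,\star)$ if it is $(\star,t_T)$-flat over $D$. The semistar operation $\ell_{\star,T}$ on $T$ is $E^{\ell_{\star,T}}=\bigcap\{ET_{D\setminus P}:P$ a quasi-$\star_f$-prime of $D\}$ (equal to $K$ if there are none). $D$ is a P$\star$MD if every $F\in\mathbf f(D)$ satisfies $(FF^{-1})^{\star_f}=D^\star$, where $F^{-1}=(D:_KF)$. *)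

theory Defs
  imports Main
begin

text \<open>The quotient field K is modelled as the whole type 'a :: field; the domain D
  (and its overrings) are subsets of 'a.\<close>

definition subring :: "'a::field set \<Rightarrow> bool" where
  "subring R \<longleftrightarrow> 0 \<in> R \<and> 1 \<in> R \<and> (\<forall>x\<in>R. \<forall>y\<in>R. x + y \<in> R \<and> - x \<in> R \<and> x * y \<in> R)"

definition domain_qf :: "'a::field set \<Rightarrow> bool" where
  "domain_qf D \<longleftrightarrow> subring D \<and> (\<forall>x. \<exists>a\<in>D. \<exists>b\<in>D. b \<noteq> 0 \<and> x = a / b)"

definition overring :: "'a::field set \<Rightarrow> 'a set \<Rightarrow> bool" where
  "overring D T \<longleftrightarrow> subring T \<and> D \<subseteq> T"

definition submod :: "'a::field set \<Rightarrow> 'a set \<Rightarrow> bool" where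
  "submod R E \<longleftrightarrow> 0 \<in> E \<and> (\<forall>x\<in>E. \<forall>y\<in>E. x + y \<in> E) \<and> (\<forall>r\<in>R. \<forall>x\<in>E. r * x \<in> E)"

definition Fbar :: "'a::field set \<Rightarrow> 'a set set" where
  "Fbar R = {E. submod R E \<and> E \<noteq> {0}}"

definition span :: "'a::field set \<Rightarrow> 'a set \<Rightarrow> 'a set" where
  "span R S = \<Inter>{E. submod R E \<and> S \<subseteq> E}"

definition fgen :: "'a::field set \<Rightarrow> 'a set set" where
  "fgen R = {E \<in> Fbar R. \<exists>S. finite S \<and> E = span R S}"

definition semistar :: "'a::field set \<Rightarrow> ('a set \<Rightarrow> 'a set) \<Rightarrow> bool" where
  "semistar R st \<longleftrightarrow>
     (\<forall>E\<in>Fbar R. st E \<in> Fbar R) \<and>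
     (\<forall>x E. x \<noteq> 0 \<longrightarrow> E \<in> Fbar R \<longrightarrow> st ((\<lambda>y. x * y) ` E) = (\<lambda>y. x * y) ` st E) \<and>
     (\<forall>E F. E \<in> Fbar R \<longrightarrow> F \<in> Fbar R \<longrightarrow> E \<subseteq> F \<longrightarrow> st E \<subseteq> st F) \<and>
     (\<forall>E\<in>Fbar R. E \<subseteq> st E \<and> st (st E) = st E)"

definition star_f :: "'a::field set \<Rightarrow> ('a set \<Rightarrow> 'a set) \<Rightarrow> 'a set \<Rightarrow> 'a set" where
  "star_f R st E = \<Union>{st F | F. F \<in> fgen R \<and> F \<subseteq> E}"

definition ideal_of :: "'a::field set \<Rightarrow> 'a set \<Rightarrow> bool" where
  "ideal_of R I \<longleftrightarrow> I \<subseteq> R \<and> submod R I"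

definition quasi_ideal :: "'a::field set \<Rightarrow> ('a set \<Rightarrow> 'a set) \<Rightarrow> 'a set \<Rightarrow> bool" where
  "quasi_ideal R st I \<longleftrightarrow> ideal_of R I \<and> I \<noteq> {0} \<and> st I \<inter> R = I"

definition quasi_prime :: "'a::field set \<Rightarrow> ('a set \<Rightarrow> 'a set) \<Rightarrow> 'a set \<Rightarrow> bool" where
  "quasi_prime R st P \<longleftrightarrow> quasi_ideal R st P \<and> P \<noteq> R \<and>
     (\<forall>a\<in>R. \<forall>b\<in>R. a * b \<in> P \<longrightarrow> a \<in> P \<or> b \<in> P)"

definition loc :: "'a::field set \<Rightarrow> 'a set \<Rightarrow> 'a set" where
  "loc R S = {a / s | a s. a \<in> R \<and> s \<in> S}"

definition colon :: "'a::field set \<Rightarrow> 'a set \<Rightarrow> 'a set" where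
  "colon R E = {x. \<forall>e\<in>E. x * e \<in> R}"

definition v_op :: "'a::field set \<Rightarrow> 'a set \<Rightarrow> 'a set" where
  "v_op T E = colon T (colon T E)"

definition t_op :: "'a::field set \<Rightarrow> 'a set \<Rightarrow> 'a set" where
  "t_op T = star_f T (v_op T)"

definition d_op :: "'a::field set \<Rightarrow> 'a set" where
  "d_op E = E"

definition linked :: "'a::field set \<Rightarrow> ('a set \<Rightarrow> 'a set) \<Rightarrow> 'a set \<Rightarrow> ('a set \<Rightarrow> 'a set) \<Rightarrow> bool" where
  "linked D st T st' \<longleftrightarrow>
     (\<forall>F. F \<in> fgen D \<and> F \<subseteq> D \<and> st F = st D \<longrightarrow> st' (span T F) = st' T)"

definition flat :: "'a::field set \<Rightarrow> ('a set \<Rightarrow> 'a set) \<Rightarrow> 'a set \<Rightarrow> ('a set \<Rightarrow> 'a set) \<Rightarrow> bool" where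
  "flat D st T st' \<longleftrightarrow> linked D st T st' \<and>
     (\<forall>Q. quasi_prime T (star_f T st') Q \<longrightarrow> loc D (D - (Q \<inter> D)) = loc T (T - Q))"

text \<open>ell_{st,T}: E T_{D\P} is the T_{D\P}-submodule generated by E; empty intersection is K = UNIV\<close>
definition ell :: "'a::field set \<Rightarrow> ('a set \<Rightarrow> 'a set) \<Rightarrow> 'a set \<Rightarrow> 'a set \<Rightarrow> 'a set" where
  "ell D st T E = \<Inter>{span (loc T (D - P)) E | P. quasi_prime D (star_f D st) P}"

definition PstarMD :: "'a::field set \<Rightarrow> ('a set \<Rightarrow> 'a set) \<Rightarrow> bool" where
  "PstarMD D st \<longleftrightarrow>
     (\<forall>F\<in>fgen D. star_f D st (span D {x * y | x y. x \<in> F \<and> y \<in> colon D F}) = st D)"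

end

theory Submission
  imports Defs
begin

text \<open>
Both directions go through valuation rings. If D is a P*MD and P is a prime of D with
1 not in the *_f-closure of P, then D_P is a valuation ring: for x = a/b the ideal
(a,b)(a,b)^-1 is not contained in P, so some y with ay, by in D has ay or by outside P.
The contraction of a quasi-*'_f-prime Q of a linked overring T is such a prime, and the
valuation ring D_(Q \<inter> D) cannot be strictly smaller than T_Q.

Conversely, suppose D_P is a valuation ring for every quasi-*_f-prime P. If
(F F^-1)^*_f is not D^*, Zorn's lemma puts F F^-1 inside such a P, and dividing by a
generator of F of least value at P gives an element of F F^-1 outside P. Finally,
flatness of the overrings forces D_P to be a valuation ring: by Chevalley's theorem some
valuation ring W containing D_P has maximal ideal m with m \<inter> D = P; W is linked to D and
m is a quasi-prime for d, t and ell on W, so flatness yields D_P = W_m = W.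
\<close>

lemma subringD:
  assumes "subring R"
  shows "0 \<in> R" "1 \<in> R" "x \<in> R \<Longrightarrow> y \<in> R \<Longrightarrow> x + y \<in> R"
    "x \<in> R \<Longrightarrow> - x \<in> R" "x \<in> R \<Longrightarrow> y \<in> R \<Longrightarrow> x * y \<in> R"
    "x \<in> R \<Longrightarrow> y \<in> R \<Longrightarrow> x - y \<in> R"
  using assms unfolding subring_def
  by (auto, metis diff_conv_add_uminus)

lemma subring_power: "subring R \<Longrightarrow> x \<in> R \<Longrightarrow> x ^ n \<in> R"
  by (induction n) (simp_all add: subringD)

lemma subring_Inter: "(\<And>R. R \<in> \<R> \<Longrightarrow> subring R) \<Longrightarrow> subring (\<Inter>\<R>)"
  unfolding subring_def by blast

lemma chain_Union_pair:
  assumes "subset.chain A C" "x \<in> \<Union>C" "y \<in> \<Union>C"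
  obtains E where "E \<in> C" "x \<in> E" "y \<in> E"
proof -
  obtain E1 E2 where "E1 \<in> C" "E2 \<in> C" "x \<in> E1" "y \<in> E2" using assms(2,3) by blast
  then show thesis using that assms(1) unfolding subset_chain_def by blast
qed

lemma subring_chain_Union:
  assumes "C \<noteq> {}" "subset.chain A C" "\<And>R. R \<in> C \<Longrightarrow> subring R"
  shows "subring (\<Union>C)"
  unfolding subring_def
proof (intro conjI ballI)
  obtain R0 where R0: "R0 \<in> C" using assms(1) by blast
  show "0 \<in> \<Union>C" "1 \<in> \<Union>C" using R0 subringD(1,2)[OF assms(3)[OF R0]] by blast+
next
  fix x y assume "x \<in> \<Union>C" "y \<in> \<Union>C"
  then obtain R where R: "R \<in> C" "x \<in> R" "y \<in> R" by (rule chain_Union_pair[OF assms(2)])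
  show "x + y \<in> \<Union>C" "- x \<in> \<Union>C" "x * y \<in> \<Union>C"
    using R subringD(3-5)[OF assms(3)[OF R(1)]] by blast+
qed

lemma subring_multipliers:
  assumes "0 \<in> E" "\<And>x y. x \<in> E \<Longrightarrow> y \<in> E \<Longrightarrow> x + y \<in> E" "\<And>x. x \<in> E \<Longrightarrow> - x \<in> E"
  shows "subring {r. \<forall>e\<in>E. r * e \<in> E}"
  unfolding subring_def
proof (intro conjI ballI; clarify)
  fix r s e assume "\<forall>e\<in>E. r * e \<in> E" "\<forall>e\<in>E. s * e \<in> E" "e \<in> E"
  then show "(r + s) * e \<in> E" "- r * e \<in> E" "r * s * e \<in> E"
    using assms by (simp_all add: distrib_right mult.assoc)
qed (use assms in auto)

lemma submodD:
  assumes "submod R E"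
  shows "0 \<in> E" "x \<in> E \<Longrightarrow> y \<in> E \<Longrightarrow> x + y \<in> E" "r \<in> R \<Longrightarrow> x \<in> E \<Longrightarrow> r * x \<in> E"
  using assms unfolding submod_def by auto

lemma submod_sum: "submod R E \<Longrightarrow> (\<And>i. i \<in> A \<Longrightarrow> f i \<in> E) \<Longrightarrow> sum f A \<in> E"
  by (induction A rule: infinite_finite_induct) (simp_all add: submodD)

lemma submod_mono_ring: "submod R E \<Longrightarrow> R' \<subseteq> R \<Longrightarrow> submod R' E"
  unfolding submod_def by blast

lemma subring_submod: "subring R \<Longrightarrow> submod R R"
  unfolding subring_def submod_def by blast

lemma submod_Int: "submod R E \<Longrightarrow> submod R F \<Longrightarrow> submod R (E \<inter> F)"
  unfolding submod_def by blast

lemma submod_chain_Union: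
  assumes "C \<noteq> {}" "subset.chain A C" "\<And>E. E \<in> C \<Longrightarrow> submod R E"
  shows "submod R (\<Union>C)"
  unfolding submod_def
proof (intro conjI ballI)
  obtain E0 where "E0 \<in> C" using assms(1) by blast
  then show "0 \<in> \<Union>C" using submodD(1)[OF assms(3)] by blast
next
  fix x y assume "x \<in> \<Union>C" "y \<in> \<Union>C"
  then obtain E where E: "E \<in> C" "x \<in> E" "y \<in> E" by (rule chain_Union_pair[OF assms(2)])
  show "x + y \<in> \<Union>C" using E submodD(2)[OF assms(3)[OF E(1)]] by blast
next
  fix r x assume "r \<in> R" "x \<in> \<Union>C"
  then show "r * x \<in> \<Union>C" using submodD(3)[OF assms(3)] by blast
qed

lemma submod_multiplier_preimage:
  assumes "submod R E"
  shows "submod R {f. f * y \<in> E}"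
  unfolding submod_def
proof (intro conjI ballI)
  show "0 \<in> {f. f * y \<in> E}" using submodD(1)[OF assms] by simp
  show "u + v \<in> {f. f * y \<in> E}" if "u \<in> {f. f * y \<in> E}" "v \<in> {f. f * y \<in> E}" for u v
    using that submodD(2)[OF assms] by (simp add: distrib_right)
  show "r * u \<in> {f. f * y \<in> E}" if "r \<in> R" "u \<in> {f. f * y \<in> E}" for r u
    using that submodD(3)[OF assms] by (simp add: mult.assoc)
qed

lemma submod_span: "submod R (span R S)"
  unfolding span_def submod_def by (intro conjI ballI) auto

lemma span_superset: "S \<subseteq> span R S"
  unfolding span_def by blast

lemma span_minimal: "submod R E \<Longrightarrow> S \<subseteq> E \<Longrightarrow> span R S \<subseteq> E"
  unfolding span_def by blast

lemma span_mono: "S \<subseteq> S' \<Longrightarrow> span R S \<subseteq> span R S'"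
  by (meson order.trans span_minimal span_superset submod_span)

lemma span_mono_ring: "R \<subseteq> R' \<Longrightarrow> span R S \<subseteq> span R' S"
  by (meson span_minimal span_superset submod_mono_ring submod_span)

lemma span_mult: "x \<in> span R S \<Longrightarrow> r \<in> R \<Longrightarrow> r * x \<in> span R S"
  using submodD(3)[OF submod_span] by blast

lemma span_zero_set: "S \<subseteq> {0} \<Longrightarrow> span R S = {0}"
proof -
  assume "S \<subseteq> {0}"
  have "submod R {0}" unfolding submod_def by auto
  then have "span R S \<subseteq> {0}" using \<open>S \<subseteq> {0}\<close> by (rule span_minimal)
  then show ?thesis using submodD(1)[OF submod_span] by auto
qed

lemma span_scale_sub: "(\<lambda>y. b * y) ` span R S \<subseteq> span R ((\<lambda>y. b * y) ` S)"
proof -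
  let ?E = "{y. b * y \<in> span R ((\<lambda>y. b * y) ` S)}"
  have "submod R ?E"
    unfolding submod_def
  proof (intro conjI ballI)
    show "0 \<in> ?E" using submodD(1)[OF submod_span] by simp
  next
    fix x y assume "x \<in> ?E" "y \<in> ?E"
    then show "x + y \<in> ?E" using submodD(2)[OF submod_span] by (simp add: distrib_left)
  next
    fix r x assume "r \<in> R" "x \<in> ?E"
    then show "r * x \<in> ?E" using span_mult by (metis mem_Collect_eq mult.left_commute)
  qed
  moreover have "S \<subseteq> ?E" using span_superset by blast
  ultimately have "span R S \<subseteq> ?E" by (rule span_minimal)
  then show ?thesis by blast
qed

lemma span_span_ring_ext:
  assumes "R \<subseteq> T"
  shows "span T (span R S) = span T S"
proof
  have "span R S \<subseteq> span T S"
    by (rule span_minimal[OF submod_mono_ring[OF submod_span assms] span_superset])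
  then show "span T (span R S) \<subseteq> span T S" using span_minimal[OF submod_span] by blast
  show "span T S \<subseteq> span T (span R S)" by (rule span_mono[OF span_superset])
qed

lemma one_in_submod_imp_ring_subset: "submod R E \<Longrightarrow> 1 \<in> E \<Longrightarrow> R \<subseteq> E"
  using submodD(3)[of R E _ 1] by fastforce

lemma Fbar_iff: "E \<in> Fbar R \<longleftrightarrow> submod R E \<and> (\<exists>x\<in>E. x \<noteq> 0)"
  unfolding Fbar_def using submodD(1) by fastforce

lemma Fbar_scale:
  assumes "E \<in> Fbar R" "b \<noteq> 0"
  shows "(\<lambda>y. b * y) ` E \<in> Fbar R"
proof -
  have sm: "submod R E" using assms(1) unfolding Fbar_iff by blast
  have "submod R ((\<lambda>y. b * y) ` E)"
    unfolding submod_def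
  proof (intro conjI ballI)
    show "0 \<in> (\<lambda>y. b * y) ` E" using submodD(1)[OF sm] by force
  next
    fix x y assume "x \<in> (\<lambda>y. b * y) ` E" "y \<in> (\<lambda>y. b * y) ` E"
    then show "x + y \<in> (\<lambda>y. b * y) ` E"
      using submodD(2)[OF sm] by (auto simp: distrib_left[symmetric])
  next
    fix r x assume "r \<in> R" "x \<in> (\<lambda>y. b * y) ` E"
    then show "r * x \<in> (\<lambda>y. b * y) ` E"
      using submodD(3)[OF sm] by (auto simp: mult.left_commute)
  qed
  then show ?thesis using assms unfolding Fbar_iff by auto
qed

lemma subring_Fbar: "subring R \<Longrightarrow> R \<in> Fbar R"
  unfolding Fbar_iff using subring_submod subringD(2) one_neq_zero by metis

lemma fgen_span: "finite S \<Longrightarrow> x \<in> S \<Longrightarrow> x \<noteq> 0 \<Longrightarrow> span R S \<in> fgen R"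
  unfolding fgen_def Fbar_iff using submod_span span_superset by blast

lemma fgen_Fbar: "F \<in> fgen R \<Longrightarrow> F \<in> Fbar R"
  unfolding fgen_def by auto

lemma fgenE:
  assumes "F \<in> fgen R"
  obtains S where "finite S" "F = span R S" "submod R F" "F \<noteq> {0}"
  using assms unfolding fgen_def Fbar_def by auto

lemma fgen_single: "x \<noteq> 0 \<Longrightarrow> span R {x} \<in> fgen R"
  by (rule fgen_span) auto

lemma subring_fgen: "subring R \<Longrightarrow> R \<in> fgen R"
proof -
  assume R: "subring R"
  have "span R {1} = R"
  proof
    show "span R {1} \<subseteq> R" by (rule span_minimal[OF subring_submod[OF R]]) (simp add: subringD(2)[OF R])
    show "R \<subseteq> span R {1}" using span_mult[of 1 R "{1}"] span_superset by fastforce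
  qed
  then show ?thesis using fgen_single[of 1 R] by simp
qed

lemma fgen_ring_ext:
  assumes "D \<subseteq> T" "G \<in> fgen D"
  shows "span T G \<in> fgen T"
proof -
  obtain S where S: "finite S" "G = span D S" "G \<noteq> {0}" using assms(2) by (rule fgenE)
  obtain x where "x \<in> S" "x \<noteq> 0" using S(2,3) span_zero_set by blast
  then have "span T S \<in> fgen T" using fgen_span[OF S(1)] by blast
  then show ?thesis using span_span_ring_ext[OF assms(1)] S(2) by simp
qed

lemma fgen_directed:
  assumes "G1 \<in> fgen R" "G2 \<in> fgen R" "submod R M" "G1 \<subseteq> M" "G2 \<subseteq> M"
  shows "\<exists>G3\<in>fgen R. G1 \<subseteq> G3 \<and> G2 \<subseteq> G3 \<and> G3 \<subseteq> M"
proof -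
  obtain S1 where S1: "finite S1" "G1 = span R S1" "G1 \<noteq> {0}" using assms(1) by (rule fgenE)
  obtain S2 where S2: "finite S2" "G2 = span R S2" using assms(2) by (rule fgenE)
  obtain x where x: "x \<in> S1" "x \<noteq> 0" using S1 span_zero_set[of S1 R] by blast
  let ?G = "span R (S1 \<union> S2)"
  have "?G \<in> fgen R" using fgen_span[of "S1 \<union> S2" x R] S1 S2 x by auto
  moreover have "G1 \<subseteq> ?G" "G2 \<subseteq> ?G" using S1(2) S2(2) span_mono by blast+
  moreover have "?G \<subseteq> M" using span_minimal[OF assms(3)] assms(4,5) S1 S2 span_superset
    by (metis Un_subset_iff order.trans)
  ultimately show ?thesis by blast
qed

lemma colonD: "y \<in> colon R E \<Longrightarrow> e \<in> E \<Longrightarrow> y * e \<in> R"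
  unfolding colon_def by blast

lemma colon_spanI:
  assumes D: "subring D" and "\<And>s. s \<in> S \<Longrightarrow> y * s \<in> D"
  shows "y \<in> colon D (span D S)"
proof -
  have "S \<subseteq> {f. f * y \<in> D}" using assms(2) by (simp add: subset_eq mult.commute)
  then have "span D S \<subseteq> {f. f * y \<in> D}"
    by (rule span_minimal[OF submod_multiplier_preimage[OF subring_submod[OF D]]])
  then show ?thesis unfolding colon_def by (simp add: subset_eq mult.commute)
qed

lemma ideal_ofD: "ideal_of R I \<Longrightarrow> I \<subseteq> R" "ideal_of R I \<Longrightarrow> submod R I"
  unfolding ideal_of_def by auto

lemma ideal_one: "ideal_of R Q \<Longrightarrow> 1 \<in> Q \<Longrightarrow> Q = R"
  using one_in_submod_imp_ring_subset ideal_ofD by blast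

lemma domain_qfD: "domain_qf D \<Longrightarrow> subring D"
  "domain_qf D \<Longrightarrow> \<exists>a\<in>D. \<exists>b\<in>D. b \<noteq> 0 \<and> x = a / b"
  unfolding domain_qf_def by auto

lemma overringD: "overring D T \<Longrightarrow> subring T" "overring D T \<Longrightarrow> D \<subseteq> T"
  unfolding overring_def by auto

lemma semistarD:
  assumes "semistar R st"
  shows "E \<in> Fbar R \<Longrightarrow> st E \<in> Fbar R"
    "x \<noteq> 0 \<Longrightarrow> E \<in> Fbar R \<Longrightarrow> st ((\<lambda>y. x * y) ` E) = (\<lambda>y. x * y) ` st E"
    "E \<in> Fbar R \<Longrightarrow> F \<in> Fbar R \<Longrightarrow> E \<subseteq> F \<Longrightarrow> st E \<subseteq> st F"
    "E \<in> Fbar R \<Longrightarrow> E \<subseteq> st E"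
    "E \<in> Fbar R \<Longrightarrow> st (st E) = st E"
  using assms unfolding semistar_def
  by (simp_all only: Ball_def) (metis (no_types))+

lemma semistar_submod: "semistar R st \<Longrightarrow> E \<in> Fbar R \<Longrightarrow> submod R (st E)"
  using semistarD(1) unfolding Fbar_def by blast

lemma semistar_least:
  "semistar R st \<Longrightarrow> E \<in> Fbar R \<Longrightarrow> F \<in> Fbar R \<Longrightarrow> E \<subseteq> st F \<Longrightarrow> st E \<subseteq> st F"
  by (metis semistarD(1,3,5))

lemma semistar_span_least:
  assumes "semistar R st" "F \<in> fgen R" "G \<in> fgen R" "G = span R S" "S \<subseteq> st F"
  shows "st G \<subseteq> st F"
proof -
  have "G \<subseteq> st F" using assms(4,5) span_minimal[OF semistar_submod[OF assms(1) fgen_Fbar[OF assms(2)]]] by blast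
  then show ?thesis using semistar_least[OF assms(1) fgen_Fbar[OF assms(3)] fgen_Fbar[OF assms(2)]] by blast
qed

lemma one_in_semistar_ring: "semistar R st \<Longrightarrow> subring R \<Longrightarrow> 1 \<in> st R"
  using semistarD(4)[of R st R] subring_Fbar subringD(2) by blast

lemma semistar_eq_ring_if_one:
  assumes "semistar R st" "subring R" "G \<in> Fbar R" "G \<subseteq> R" "1 \<in> st G"
  shows "st G = st R"
proof
  show "st G \<subseteq> st R" using semistarD(3)[OF assms(1) assms(3) subring_Fbar[OF assms(2)] assms(4)] .
  have "R \<subseteq> st G" using one_in_submod_imp_ring_subset[OF semistar_submod[OF assms(1,3)] assms(5)] .
  then show "st R \<subseteq> st G" using semistar_least[OF assms(1) subring_Fbar[OF assms(2)] assms(3)] by blast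
qed

lemma semistar_d_op: "semistar T d_op"
  unfolding semistar_def d_op_def by auto

lemma v_op_extensive: "E \<subseteq> v_op R E"
  unfolding v_op_def colon_def by (auto simp: mult.commute)

lemma star_f_iff: "x \<in> star_f R st E \<longleftrightarrow> (\<exists>G\<in>fgen R. G \<subseteq> E \<and> x \<in> st G)"
  unfolding star_f_def by blast

lemma star_f_mono: "E \<subseteq> E' \<Longrightarrow> star_f R st E \<subseteq> star_f R st E'"
  unfolding star_f_def by blast

lemma star_f_extensive:
  assumes "semistar R st" "submod R E" "y \<in> E" "y \<noteq> 0"
  shows "E \<subseteq> star_f R st E"
proof
  fix x assume x: "x \<in> E"
  define g where "g = (if x = 0 then y else x)"
  have G: "span R {g} \<in> fgen R" "span R {g} \<subseteq> E"
    using fgen_single span_minimal[OF assms(2)] assms(3,4) x unfolding g_def by auto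
  have "x \<in> span R {g}"
    using span_superset submodD(1)[OF submod_span] unfolding g_def by (cases "x = 0") auto
  then have "x \<in> st (span R {g})" using semistarD(4)[OF assms(1) fgen_Fbar[OF G(1)]] by blast
  then show "x \<in> star_f R st E" using G unfolding star_f_iff by blast
qed

lemma finite_subset_star_f:
  assumes "semistar R st" "submod R M" "m \<in> M" "m \<noteq> 0" "finite S" "S \<subseteq> star_f R st M"
  shows "\<exists>G\<in>fgen R. G \<subseteq> M \<and> S \<subseteq> st G"
  using assms(5,6)
proof (induction S rule: finite_induct)
  case empty
  have "span R {m} \<in> fgen R" by (rule fgen_single) fact
  moreover have "span R {m} \<subseteq> M" using span_minimal[OF assms(2)] assms(3) by simp
  ultimately show ?case by blast
next
  case (insert x S)
  obtain G2 where G2: "G2 \<in> fgen R" "G2 \<subseteq> M" "S \<subseteq> st G2"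
    using insert.IH insert.prems by blast
  have "x \<in> star_f R st M" using insert.prems by blast
  then obtain G1 where G1: "G1 \<in> fgen R" "G1 \<subseteq> M" "x \<in> st G1" unfolding star_f_iff by blast
  obtain G3 where G3: "G3 \<in> fgen R" "G1 \<subseteq> G3" "G2 \<subseteq> G3" "G3 \<subseteq> M"
    using fgen_directed[OF G1(1) G2(1) assms(2) G1(2) G2(2)] by blast
  have "st G1 \<subseteq> st G3"
    by (rule semistarD(3)[OF assms(1) fgen_Fbar[OF G1(1)] fgen_Fbar[OF G3(1)] G3(2)])
  moreover have "st G2 \<subseteq> st G3"
    by (rule semistarD(3)[OF assms(1) fgen_Fbar[OF G2(1)] fgen_Fbar[OF G3(1)] G3(3)])
  ultimately show ?case using G1(3) G2(3) G3(1,4) by blast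
qed

lemma submod_star_f:
  assumes "semistar R st" "submod R M" "m \<in> M" "m \<noteq> 0"
  shows "submod R (star_f R st M)"
  unfolding submod_def
proof (intro conjI ballI)
  show "0 \<in> star_f R st M" using star_f_extensive[OF assms] submodD(1)[OF assms(2)] by blast
next
  fix x y assume "x \<in> star_f R st M" "y \<in> star_f R st M"
  then obtain G where G: "G \<in> fgen R" "G \<subseteq> M" "{x, y} \<subseteq> st G"
    using finite_subset_star_f[OF assms, of "{x, y}"] by auto
  then have "x + y \<in> st G" using submodD(2)[OF semistar_submod[OF assms(1) fgen_Fbar[OF G(1)]]] by blast
  then show "x + y \<in> star_f R st M" unfolding star_f_iff using G(1,2) by blast
next
  fix r x assume "r \<in> R" "x \<in> star_f R st M"
  then obtain G where G: "G \<in> fgen R" "G \<subseteq> M" "x \<in> st G" unfolding star_f_iff by blast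
  then have "r * x \<in> st G"
    using submodD(3)[OF semistar_submod[OF assms(1) fgen_Fbar[OF G(1)]]] \<open>r \<in> R\<close> by blast
  then show "r * x \<in> star_f R st M" unfolding star_f_iff using G(1,2) by blast
qed

lemma star_f_eq_if_one:
  assumes "semistar R st" "subring R" "I \<subseteq> R" "1 \<in> star_f R st I"
  shows "star_f R st I = st R"
proof
  show "star_f R st I \<subseteq> st R" unfolding star_f_def
    using semistarD(3)[OF assms(1)] fgen_Fbar subring_Fbar[OF assms(2)] assms(3) by blast
  obtain G where G: "G \<in> fgen R" "G \<subseteq> I" "1 \<in> st G" using assms(4) unfolding star_f_iff by blast
  have "st G = st R" using semistar_eq_ring_if_one[OF assms(1,2) fgen_Fbar[OF G(1)]] G assms(3) by blast
  then show "st R \<subseteq> star_f R st I" using G unfolding star_f_def by blast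
qed

lemma star_f_idem_sub:
  assumes "semistar R st" "submod R M" "m \<in> M" "m \<noteq> 0"
  shows "star_f R st (star_f R st M) \<subseteq> star_f R st M"
proof
  fix x assume "x \<in> star_f R st (star_f R st M)"
  then obtain G where G: "G \<in> fgen R" "G \<subseteq> star_f R st M" "x \<in> st G" unfolding star_f_iff by blast
  obtain S where S: "finite S" "G = span R S" using G(1) by (rule fgenE)
  have "S \<subseteq> star_f R st M" using S(2) span_superset G(2) by blast
  then obtain G' where G': "G' \<in> fgen R" "G' \<subseteq> M" "S \<subseteq> st G'"
    using finite_subset_star_f[OF assms S(1)] by blast
  have "st G \<subseteq> st G'" by (rule semistar_span_least[OF assms(1) G'(1) G(1) S(2) G'(3)])
  then show "x \<in> star_f R st M" using G(3) G'(1,2) unfolding star_f_iff by blast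
qed

section \<open>Quasi-primes from Zorn's lemma\<close>

definition max_star_f_proper :: "'a::field set \<Rightarrow> ('a set \<Rightarrow> 'a set) \<Rightarrow> 'a set \<Rightarrow> bool" where
  "max_star_f_proper D st M \<longleftrightarrow> ideal_of D M \<and> 1 \<notin> star_f D st M \<and>
     (\<forall>X. ideal_of D X \<and> M \<subseteq> X \<and> 1 \<notin> star_f D st X \<longrightarrow> X = M)"

lemma one_notin_star_f_chain_Union:
  assumes "C \<noteq> {}" "subset.chain A C" "\<And>I. I \<in> C \<Longrightarrow> submod D I"
    "\<And>I. I \<in> C \<Longrightarrow> 1 \<notin> star_f D st I"
  shows "1 \<notin> star_f D st (\<Union>C)"
proof
  assume "1 \<in> star_f D st (\<Union>C)"
  then obtain G where G: "G \<in> fgen D" "G \<subseteq> \<Union>C" "1 \<in> st G" unfolding star_f_iff by blast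
  obtain S where S: "finite S" "G = span D S" using G(1) by (rule fgenE)
  have "S \<subseteq> \<Union>C" using S(2) span_superset G(2) by blast
  then obtain I where I: "I \<in> C" "S \<subseteq> I" by (rule finite_subset_Union_chain[OF S(1) _ assms(1,2)])
  have "G \<subseteq> I" using S(2) span_minimal[OF assms(3)[OF I(1)] I(2)] by blast
  then have "1 \<in> star_f D st I" using G(1,3) unfolding star_f_iff by blast
  then show False using assms(4)[OF I(1)] by blast
qed

lemma exists_max_star_f_proper:
  assumes "ideal_of D J" "1 \<notin> star_f D st J"
  obtains M where "max_star_f_proper D st M" "J \<subseteq> M"
proof -
  define A where "A = {I. ideal_of D I \<and> J \<subseteq> I \<and> 1 \<notin> star_f D st I}"
  have "\<exists>M\<in>A. \<forall>X\<in>A. M \<subseteq> X \<longrightarrow> X = M"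
  proof (rule subset_Zorn_nonempty)
    show "A \<noteq> {}" using assms unfolding A_def by blast
  next
    fix C assume C: "C \<noteq> {}" "subset.chain A C"
    then have CA: "\<And>I. I \<in> C \<Longrightarrow> ideal_of D I \<and> J \<subseteq> I \<and> 1 \<notin> star_f D st I"
      unfolding A_def subset_chain_def by blast
    have "submod D (\<Union>C)" using submod_chain_Union[OF C] CA ideal_ofD(2) by blast
    moreover have "\<Union>C \<subseteq> D" "J \<subseteq> \<Union>C" using CA ideal_ofD(1) C(1) by blast+
    moreover have "1 \<notin> star_f D st (\<Union>C)"
      using one_notin_star_f_chain_Union[OF C] CA ideal_ofD(2) by blast
    ultimately show "\<Union>C \<in> A" unfolding A_def ideal_of_def by blast
  qed
  then obtain M where "M \<in> A" "\<forall>X\<in>A. M \<subseteq> X \<longrightarrow> X = M" by blast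
  then have "max_star_f_proper D st M" "J \<subseteq> M" unfolding A_def max_star_f_proper_def by blast+
  then show thesis by (rule that)
qed

lemma max_star_f_proper_quasi:
  assumes D: "subring D" and ss: "semistar D st" and M: "max_star_f_proper D st M"
    and j: "j \<in> M" "j \<noteq> 0"
  shows "star_f D st M \<inter> D = M"
proof -
  have Mi: "ideal_of D M" and M1: "1 \<notin> star_f D st M"
    and max: "\<And>X. ideal_of D X \<Longrightarrow> M \<subseteq> X \<Longrightarrow> 1 \<notin> star_f D st X \<Longrightarrow> X = M"
    using M unfolding max_star_f_proper_def by blast+
  have Msm: "submod D M" using ideal_ofD(2)[OF Mi] .
  let ?M' = "star_f D st M \<inter> D"
  have "M \<subseteq> ?M'" using star_f_extensive[OF ss Msm j] ideal_ofD(1)[OF Mi] by blast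
  moreover have "ideal_of D ?M'" unfolding ideal_of_def
    using submod_Int[OF submod_star_f[OF ss Msm j] subring_submod[OF D]] by blast
  moreover have "star_f D st ?M' \<subseteq> star_f D st M"
    using star_f_mono[of ?M' "star_f D st M"] star_f_idem_sub[OF ss Msm j] by blast
  ultimately show ?thesis using max M1 by blast
qed

lemma ideal_add_multiples:
  assumes D: "subring D" and M: "ideal_of D M" and a: "a \<in> D"
  shows "ideal_of D {m + d * a | m d. m \<in> M \<and> d \<in> D}"
  unfolding ideal_of_def submod_def
proof (intro conjI ballI subsetI)
  have Msm: "submod D M" and MD: "M \<subseteq> D" using ideal_ofD[OF M] by auto
  show "0 \<in> {m + d * a | m d. m \<in> M \<and> d \<in> D}" using submodD(1)[OF Msm] subringD(1)[OF D] by force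
  fix x assume "x \<in> {m + d * a | m d. m \<in> M \<and> d \<in> D}"
  then obtain m1 d1 where x: "x = m1 + d1 * a" "m1 \<in> M" "d1 \<in> D" by blast
  then show "x \<in> D" using MD a subringD(3,5)[OF D] by blast
  fix y assume "y \<in> {m + d * a | m d. m \<in> M \<and> d \<in> D}"
  then obtain m2 d2 where y: "y = m2 + d2 * a" "m2 \<in> M" "d2 \<in> D" by blast
  have "x + y = (m1 + m2) + (d1 + d2) * a" using x y by (simp add: algebra_simps)
  then show "x + y \<in> {m + d * a | m d. m \<in> M \<and> d \<in> D}"
    using submodD(2)[OF Msm x(2) y(2)] subringD(3)[OF D x(3) y(3)] by blast
next
  have Msm: "submod D M" using ideal_ofD[OF M] by auto
  fix r x assume "r \<in> D" "x \<in> {m + d * a | m d. m \<in> M \<and> d \<in> D}"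
  then obtain m1 d1 where x: "x = m1 + d1 * a" "m1 \<in> M" "d1 \<in> D" by blast
  have "r * x = r * m1 + (r * d1) * a" using x by (simp add: algebra_simps)
  then show "r * x \<in> {m + d * a | m d. m \<in> M \<and> d \<in> D}"
    using submodD(3)[OF Msm \<open>r \<in> D\<close> x(2)] subringD(5)[OF D \<open>r \<in> D\<close> x(3)] by blast
qed

lemma max_star_f_proper_adjoin:
  assumes D: "subring D" and ss: "semistar D st" and M: "max_star_f_proper D st M"
    and a: "a \<in> D" "a \<notin> M"
  obtains S where "finite S" "S \<subseteq> M" "1 \<in> st (span D (insert a S))"
proof -
  let ?Ma = "{m + d * a | m d. m \<in> M \<and> d \<in> D}"
  have Mi: "ideal_of D M" and max: "\<And>X. ideal_of D X \<Longrightarrow> M \<subseteq> X \<Longrightarrow> 1 \<notin> star_f D st X \<Longrightarrow> X = M"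
    using M unfolding max_star_f_proper_def by blast+
  have "M \<subseteq> ?Ma" using subringD(1)[OF D] by force
  moreover have "a \<in> ?Ma" using submodD(1)[OF ideal_ofD(2)[OF Mi]] subringD(2)[OF D] by force
  ultimately have "1 \<in> star_f D st ?Ma" using max[OF ideal_add_multiples[OF D Mi a(1)]] a(2) by blast
  then obtain G where G: "G \<in> fgen D" "G \<subseteq> ?Ma" "1 \<in> st G" unfolding star_f_iff by blast
  obtain S0 where S0: "finite S0" "G = span D S0" using G(1) by (rule fgenE)
  have "\<forall>s\<in>S0. \<exists>m d. s = m + d * a \<and> m \<in> M \<and> d \<in> D" using S0(2) span_superset G(2) by blast
  then obtain mf df where "\<forall>s\<in>S0. s = mf s + df s * a \<and> mf s \<in> M \<and> df s \<in> D" by metis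
  then have mf: "\<And>s. s \<in> S0 \<Longrightarrow> s = mf s + df s * a \<and> mf s \<in> M \<and> df s \<in> D" by blast
  let ?A = "span D (insert a (mf ` S0))"
  have "s \<in> ?A" if s: "s \<in> S0" for s
  proof -
    have "mf s \<in> insert a (mf ` S0)" "a \<in> insert a (mf ` S0)" using s by blast+
    then have m1: "mf s \<in> ?A" and "a \<in> ?A" using span_superset[of "insert a (mf ` S0)" D] by auto
    then have m2: "df s * a \<in> ?A" using span_mult mf[OF s] by blast
    have "mf s + df s * a \<in> ?A" by (rule submodD(2)[OF submod_span m1 m2])
    then show ?thesis using mf[OF s] by metis
  qed
  moreover have A: "?A \<in> fgen D"
    using fgen_span[of "insert a (mf ` S0)" a D] S0(1) a(2) submodD(1)[OF ideal_ofD(2)[OF Mi]] by fastforce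
  ultimately have "S0 \<subseteq> st ?A" using semistarD(4)[OF ss fgen_Fbar[OF A]] by blast
  then have "st G \<subseteq> st ?A" by (rule semistar_span_least[OF ss A G(1) S0(2)])
  then show thesis using that[of "mf ` S0"] G(3) S0(1) mf by blast
qed

lemma max_star_f_proper_prime:
  assumes D: "subring D" and ss: "semistar D st" and M: "max_star_f_proper D st M"
    and ab: "a \<in> D" "b \<in> D" "a * b \<in> M"
  shows "a \<in> M \<or> b \<in> M"
proof (rule ccontr)
  assume "\<not> (a \<in> M \<or> b \<in> M)"
  then have a: "a \<notin> M" and b: "b \<notin> M" by auto
  obtain Sa where Sa: "finite Sa" "Sa \<subseteq> M" "1 \<in> st (span D (insert a Sa))"
    using max_star_f_proper_adjoin[OF D ss M ab(1) a] by blast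
  obtain Sb where Sb: "finite Sb" "Sb \<subseteq> M" "1 \<in> st (span D (insert b Sb))"
    using max_star_f_proper_adjoin[OF D ss M ab(2) b] by blast
  have Mi: "ideal_of D M" and M1: "1 \<notin> star_f D st M" using M unfolding max_star_f_proper_def by blast+
  have Msm: "submod D M" using ideal_ofD(2)[OF Mi] .
  have a0: "a \<noteq> 0" and b0: "b \<noteq> 0" using a b submodD(1)[OF Msm] by auto
  let ?A = "span D (insert a Sa)" and ?B = "span D (insert b Sb)"
  let ?C = "span D (insert (a * b) ((\<lambda>y. b * y) ` Sa \<union> Sb))"
  have A: "?A \<in> fgen D" using Sa(1) a0 by (intro fgen_span[of _ a]) auto
  have B: "?B \<in> fgen D" using Sb(1) b0 by (intro fgen_span[of _ b]) auto
  have C: "?C \<in> fgen D" using Sa(1) Sb(1) a0 b0 by (intro fgen_span[of _ "a * b"]) auto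
  have "insert (a * b) ((\<lambda>y. b * y) ` Sa \<union> Sb) \<subseteq> M"
    using ab(3) Sa(2) Sb(2) submodD(3)[OF Msm ab(2)] by blast
  then have CM: "?C \<subseteq> M" by (rule span_minimal[OF Msm])
  have "(\<lambda>y. b * y) ` ?A \<subseteq> span D ((\<lambda>y. b * y) ` insert a Sa)" by (rule span_scale_sub)
  also have "\<dots> \<subseteq> ?C" by (rule span_mono) (auto simp: mult.commute)
  finally have bA: "(\<lambda>y. b * y) ` ?A \<subseteq> ?C" .
  \<comment> \<open>b (a, Sa) \<subseteq> C, so 1 \<in> st (a, Sa) gives b \<in> st C; with Sb \<subseteq> C this gives (b, Sb) \<subseteq> st C\<close>
  have "b * 1 \<in> (\<lambda>y. b * y) ` st ?A" using Sa(3) by (rule imageI)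
  also have "\<dots> = st ((\<lambda>y. b * y) ` ?A)" using semistarD(2)[OF ss b0 fgen_Fbar[OF A]] by simp
  also have "\<dots> \<subseteq> st ?C" using semistarD(3)[OF ss Fbar_scale[OF fgen_Fbar[OF A] b0] fgen_Fbar[OF C] bA] .
  finally have "b \<in> st ?C" by simp
  moreover have "Sb \<subseteq> ?C" using span_superset[of "insert (a * b) ((\<lambda>y. b * y) ` Sa \<union> Sb)" D] by blast
  then have "Sb \<subseteq> st ?C" using semistarD(4)[OF ss fgen_Fbar[OF C]] by blast
  ultimately have "insert b Sb \<subseteq> st ?C" by blast
  then have "st ?B \<subseteq> st ?C" by (rule semistar_span_least[OF ss C B refl])
  then have "1 \<in> star_f D st M" using Sb(3) C CM unfolding star_f_iff by blast
  then show False using M1 by blast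
qed

lemma exists_quasi_prime:
  assumes D: "subring D" and ss: "semistar D st"
    and J: "ideal_of D J" "j \<in> J" "j \<noteq> 0" "1 \<notin> star_f D st J"
  obtains P where "quasi_prime D (star_f D st) P" "J \<subseteq> P"
proof -
  obtain M where M: "max_star_f_proper D st M" "J \<subseteq> M"
    using exists_max_star_f_proper[OF J(1,4)] by blast
  have Mi: "ideal_of D M" and M1: "1 \<notin> star_f D st M" using M(1) unfolding max_star_f_proper_def by blast+
  have "M \<noteq> D"
    using M1 subring_fgen[OF D] one_in_semistar_ring[OF ss D] unfolding star_f_iff by blast
  then have "quasi_prime D (star_f D st) M"
    unfolding quasi_prime_def quasi_ideal_def
    using Mi max_star_f_proper_quasi[OF D ss M(1)] max_star_f_proper_prime[OF D ss M(1)] J(2,3) M(2)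
    by blast
  then show thesis using that M(2) by blast
qed

definition prime_ideal :: "'a::field set \<Rightarrow> 'a set \<Rightarrow> bool" where
  "prime_ideal D P \<longleftrightarrow> ideal_of D P \<and> P \<noteq> D \<and> (\<forall>a\<in>D. \<forall>b\<in>D. a * b \<in> P \<longrightarrow> a \<in> P \<or> b \<in> P)"

lemma quasi_primeD:
  assumes "quasi_prime R st Q"
  shows "ideal_of R Q" "Q \<noteq> {0}" "st Q \<inter> R = Q" "Q \<noteq> R"
    "a \<in> R \<Longrightarrow> b \<in> R \<Longrightarrow> a * b \<in> Q \<Longrightarrow> a \<in> Q \<or> b \<in> Q"
  using assms unfolding quasi_prime_def quasi_ideal_def by auto

lemma quasi_prime_imp_prime_ideal: "quasi_prime D st P \<Longrightarrow> prime_ideal D P"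
  unfolding quasi_prime_def quasi_ideal_def prime_ideal_def by blast

lemma locI: "a \<in> R \<Longrightarrow> s \<in> S \<Longrightarrow> a / s \<in> loc R S"
  unfolding loc_def by blast

lemma locE:
  assumes "x \<in> loc R S"
  obtains a s where "a \<in> R" "s \<in> S" "x = a / s"
  using assms unfolding loc_def by blast

lemma loc_mono: "R \<subseteq> R' \<Longrightarrow> S \<subseteq> S' \<Longrightarrow> loc R S \<subseteq> loc R' S'"
  unfolding loc_def by blast

context
  fixes D P :: "'a::field set"
  assumes D: "subring D" and P: "prime_ideal D P"
begin

lemma prime_ideal_sub: "P \<subseteq> D" and prime_ideal_submod: "submod D P"
  and prime_ideal_ne: "P \<noteq> D"
  and prime_idealD: "a \<in> D \<Longrightarrow> b \<in> D \<Longrightarrow> a * b \<in> P \<Longrightarrow> a \<in> P \<or> b \<in> P"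
  using P ideal_ofD unfolding prime_ideal_def by auto

lemma zero_in_prime_ideal: "0 \<in> P"
  using submodD(1)[OF prime_ideal_submod] .

lemma compl_prime_nonzero: "s \<in> D - P \<Longrightarrow> s \<noteq> 0"
  using zero_in_prime_ideal by auto

lemma compl_prime_mult: "s \<in> D - P \<Longrightarrow> t \<in> D - P \<Longrightarrow> s * t \<in> D - P"
  using prime_idealD subringD(5)[OF D] by blast

lemma one_in_compl_prime: "1 \<in> D - P"
  using one_in_submod_imp_ring_subset[OF prime_ideal_submod] prime_ideal_sub prime_ideal_ne
    subringD(2)[OF D] by blast

lemma loc_subring: "subring (loc D (D - P))"
  unfolding subring_def
proof (intro conjI ballI)
  show "0 \<in> loc D (D - P)" using locI[OF subringD(1)[OF D] one_in_compl_prime] by simp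
  show "1 \<in> loc D (D - P)" using locI[OF subringD(2)[OF D] one_in_compl_prime] by simp
next
  fix x y assume "x \<in> loc D (D - P)" "y \<in> loc D (D - P)"
  obtain a s where as: "a \<in> D" "s \<in> D - P" "x = a / s" using \<open>x \<in> _\<close> by (rule locE)
  obtain b t where bt: "b \<in> D" "t \<in> D - P" "y = b / t" using \<open>y \<in> _\<close> by (rule locE)
  have "x + y = (a * t + b * s) / (s * t)"
    using compl_prime_nonzero as bt by (simp add: field_simps)
  moreover have "a * t + b * s \<in> D" using as bt subringD(3,5)[OF D] by blast
  ultimately show "x + y \<in> loc D (D - P)" using locI compl_prime_mult as(2) bt(2) by metis
  have "- x = (- a) / s" using as by simp
  then show "- x \<in> loc D (D - P)" using locI subringD(4)[OF D] as by metis
  have "x * y = (a * b) / (s * t)" using as bt by simp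
  then show "x * y \<in> loc D (D - P)" using locI compl_prime_mult as bt subringD(5)[OF D] by metis
qed

lemma subset_loc: "R \<subseteq> loc R (D - P)"
  using locI[OF _ one_in_compl_prime, of _ R] by force

lemma inverse_in_loc: "subring R \<Longrightarrow> s \<in> D - P \<Longrightarrow> inverse s \<in> loc R (D - P)"
  using locI[OF subringD(2), of R s "D - P"] by (simp add: divide_inverse)

lemma one_notin_span_loc: "1 \<notin> span (loc D (D - P)) P"
proof -
  define E where "E = {a / s | a s. a \<in> P \<and> s \<in> D - P}"
  have "submod (loc D (D - P)) E" unfolding submod_def
  proof (intro conjI ballI)
    show "0 \<in> E" unfolding E_def using zero_in_prime_ideal one_in_compl_prime by force
  next
    fix x y assume "x \<in> E" "y \<in> E"
    then obtain a s b t where ab: "a \<in> P" "s \<in> D - P" "x = a / s" "b \<in> P" "t \<in> D - P" "y = b / t"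
      unfolding E_def by blast
    have "x + y = (a * t + b * s) / (s * t)" using compl_prime_nonzero ab by (simp add: field_simps)
    moreover have "a * t + b * s \<in> P"
      using ab submodD(2,3)[OF prime_ideal_submod] by (metis DiffD1 mult.commute)
    ultimately show "x + y \<in> E" unfolding E_def using compl_prime_mult ab(2,5) by blast
  next
    fix r x assume r: "r \<in> loc D (D - P)" and "x \<in> E"
    then obtain a s where ab: "a \<in> P" "s \<in> D - P" "x = a / s" unfolding E_def by blast
    obtain c u where cu: "c \<in> D" "u \<in> D - P" "r = c / u" using r by (rule locE)
    have "r * x = (c * a) / (u * s)" using ab cu by simp
    moreover have "c * a \<in> P" using submodD(3)[OF prime_ideal_submod cu(1) ab(1)] .
    ultimately show "r * x \<in> E" unfolding E_def using compl_prime_mult ab(2) cu(2) by blast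
  qed
  moreover have "P \<subseteq> E" unfolding E_def using one_in_compl_prime by force
  ultimately have "span (loc D (D - P)) P \<subseteq> E" by (rule span_minimal)
  moreover have "1 \<notin> E"
  proof
    assume "1 \<in> E"
    then obtain a s where "a \<in> P" "s \<in> D - P" "1 = a / s" unfolding E_def by blast
    then show False using compl_prime_nonzero by (simp add: field_simps)
  qed
  ultimately show ?thesis by blast
qed

end

section \<open>Valuation rings\<close>

definition valuation_ring :: "'a::field set \<Rightarrow> bool" where
  "valuation_ring V \<longleftrightarrow> subring V \<and> (\<forall>x. x \<noteq> 0 \<longrightarrow> x \<in> V \<or> inverse x \<in> V)"

definition nonunits :: "'a::field set \<Rightarrow> 'a set" where
  "nonunits W = {w \<in> W. w = 0 \<or> inverse w \<notin> W}"

lemma valuation_ringD: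
  "valuation_ring V \<Longrightarrow> subring V" "valuation_ring V \<Longrightarrow> x \<noteq> 0 \<Longrightarrow> x \<in> V \<or> inverse x \<in> V"
  unfolding valuation_ring_def by auto

lemma valuation_ring_finite_max:
  assumes V: "valuation_ring V" and S: "finite S" "S \<noteq> {}" "0 \<notin> S"
  shows "\<exists>s0\<in>S. \<forall>s\<in>S. s * inverse s0 \<in> V"
  using S
proof (induction S rule: finite_ne_induct)
  case (singleton x) then show ?case using subringD(2)[OF valuation_ringD(1)[OF V]] by simp
next
  case (insert x S)
  then obtain s0 where s0: "s0 \<in> S" "\<forall>s\<in>S. s * inverse s0 \<in> V" by auto
  have x0: "x \<noteq> 0" and s00: "s0 \<noteq> 0" using insert.prems s0 by auto
  then consider "x * inverse s0 \<in> V" | "inverse (x * inverse s0) \<in> V"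
    using valuation_ringD(2)[OF V] by (metis mult_eq_0_iff inverse_nonzero_iff_nonzero)
  then show ?case
  proof cases
    case 1 then show ?thesis using s0 by blast
  next
    case 2
    have "s * inverse x \<in> V" if "s \<in> insert x S" for s
    proof (cases "s = x")
      case True then show ?thesis using x0 subringD(2)[OF valuation_ringD(1)[OF V]] by simp
    next
      case False
      then have "(s * inverse s0) * inverse (x * inverse s0) \<in> V"
        using that s0 2 subringD(5)[OF valuation_ringD(1)[OF V]] by blast
      then show ?thesis using s00 by (simp add: field_simps)
    qed
    then show ?thesis by blast
  qed
qed

context
  fixes W :: "'a::field set"
  assumes W: "valuation_ring W"
begin

lemma nonunits_mult: "r \<in> W \<Longrightarrow> x \<in> nonunits W \<Longrightarrow> r * x \<in> nonunits W"
proof (rule ccontr)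
  assume r: "r \<in> W" and x: "x \<in> nonunits W" and "r * x \<notin> nonunits W"
  then have rx: "r * x \<noteq> 0" "inverse (r * x) \<in> W"
    using subringD(5)[OF valuation_ringD(1)[OF W]] unfolding nonunits_def by auto
  have "inverse x = r * inverse (r * x)" using rx(1) by (simp add: inverse_mult_distrib)
  also have "\<dots> \<in> W" using r rx(2) subringD(5)[OF valuation_ringD(1)[OF W]] by blast
  finally show False using x rx(1) unfolding nonunits_def by auto
qed

lemma nonunits_add: "x \<in> nonunits W \<Longrightarrow> y \<in> nonunits W \<Longrightarrow> x + y \<in> nonunits W"
proof -
  assume x: "x \<in> nonunits W" and y: "y \<in> nonunits W"
  have Ws: "subring W" using valuation_ringD(1)[OF W] .
  show "x + y \<in> nonunits W"
  proof (cases "x = 0 \<or> y = 0")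
    case True then show ?thesis using x y by auto
  next
    case False
    then consider "y * inverse x \<in> W" | "x * inverse y \<in> W"
      using valuation_ringD(2)[OF W, of "y * inverse x"] by (auto simp: mult.commute)
    then show ?thesis
    proof cases
      case 1
      then have "(1 + y * inverse x) * x \<in> nonunits W" using nonunits_mult x subringD(2,3)[OF Ws] by blast
      then show ?thesis using False by (simp add: field_simps)
    next
      case 2
      then have "(x * inverse y + 1) * y \<in> nonunits W" using nonunits_mult y subringD(2,3)[OF Ws] by blast
      then show ?thesis using False by (simp add: field_simps)
    qed
  qed
qed

lemma ideal_nonunits: "ideal_of W (nonunits W)"
  unfolding ideal_of_def submod_def
  using nonunits_add nonunits_mult subringD(1)[OF valuation_ringD(1)[OF W]]
  unfolding nonunits_def by blast

lemma one_notin_nonunits: "1 \<notin> nonunits W"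
  unfolding nonunits_def using subringD(2)[OF valuation_ringD(1)[OF W]] by simp

lemma nonunits_prime: "a \<in> W \<Longrightarrow> b \<in> W \<Longrightarrow> a * b \<in> nonunits W \<Longrightarrow> a \<in> nonunits W \<or> b \<in> nonunits W"
  using subringD(5)[OF valuation_ringD(1)[OF W]] unfolding nonunits_def
  by (auto simp: inverse_mult_distrib)

lemma subset_loc_nonunits: "W \<subseteq> loc W (W - nonunits W)"
  using locI[of _ W 1 "W - nonunits W"] one_notin_nonunits subringD(2)[OF valuation_ringD(1)[OF W]]
  by force

lemma fgen_principal:
  assumes "H \<in> fgen W"
  shows "\<exists>s0\<in>H. s0 \<noteq> 0 \<and> (\<forall>h\<in>H. h * inverse s0 \<in> W)"
proof -
  have Ws: "subring W" using valuation_ringD(1)[OF W] .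
  obtain S where S: "finite S" "H = span W S" "H \<noteq> {0}" using assms by (rule fgenE)
  have "S - {0} \<noteq> {}" using S(2,3) span_zero_set[of S W] by blast
  then obtain s0 where s0: "s0 \<in> S - {0}" "\<forall>s\<in>S - {0}. s * inverse s0 \<in> W"
    using valuation_ring_finite_max[OF W, of "S - {0}"] S(1) by blast
  have "submod W {h. h * inverse s0 \<in> W}"
    using submod_multiplier_preimage[OF subring_submod[OF Ws]] .
  moreover have "S \<subseteq> {h. h * inverse s0 \<in> W}" using s0(2) subringD(1)[OF Ws] by auto
  ultimately have "H \<subseteq> {h. h * inverse s0 \<in> W}" unfolding S(2) by (rule span_minimal)
  moreover have "s0 \<in> H" using s0(1) S(2) span_superset by blast
  ultimately show ?thesis using s0(1) by blast
qed

lemma quasi_prime_nonunits: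
  assumes extensive: "\<And>G. G \<in> fgen W \<Longrightarrow> G \<subseteq> st' G"
    and local: "\<And>G. G \<in> fgen W \<Longrightarrow> G \<subseteq> nonunits W \<Longrightarrow> st' G \<inter> W \<subseteq> nonunits W"
    and nz: "nonunits W \<noteq> {0}"
  shows "quasi_prime W (star_f W st') (nonunits W)"
proof -
  have sm: "submod W (nonunits W)" using ideal_nonunits ideal_ofD by blast
  obtain q0 where q0: "q0 \<in> nonunits W" "q0 \<noteq> 0" using nz submodD(1)[OF sm] by blast
  have "nonunits W \<subseteq> star_f W st' (nonunits W)"
  proof
    fix q assume q: "q \<in> nonunits W"
    define g where "g = (if q = 0 then q0 else q)"
    have G: "span W {g} \<in> fgen W" "span W {g} \<subseteq> nonunits W"
      using fgen_single span_minimal[OF sm] q0 q unfolding g_def by auto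
    have "q \<in> span W {g}"
      using span_superset submodD(1)[OF submod_span] unfolding g_def by (cases "q = 0") auto
    then show "q \<in> star_f W st' (nonunits W)" using extensive G unfolding star_f_iff by blast
  qed
  moreover have "star_f W st' (nonunits W) \<inter> W \<subseteq> nonunits W"
    unfolding star_f_def using local by blast
  ultimately have "star_f W st' (nonunits W) \<inter> W = nonunits W"
    unfolding nonunits_def by blast
  then show ?thesis unfolding quasi_prime_def quasi_ideal_def
    using ideal_nonunits one_notin_nonunits nonunits_prime nz subringD(2)[OF valuation_ringD(1)[OF W]]
    by blast
qed

lemma quasi_prime_nonunits_t_op:
  assumes "nonunits W \<noteq> {0}"
  shows "quasi_prime W (star_f W (t_op W)) (nonunits W)"
proof (rule quasi_prime_nonunits[OF _ _ assms])
  fix G assume G: "G \<in> fgen W"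
  show "G \<subseteq> t_op W G" unfolding t_op_def star_f_def using G v_op_extensive by blast
next
  fix G assume G: "G \<in> fgen W" "G \<subseteq> nonunits W"
  show "t_op W G \<inter> W \<subseteq> nonunits W"
  proof
    fix x assume "x \<in> t_op W G \<inter> W"
    then have "x \<in> star_f W (v_op W) G" unfolding t_op_def by blast
    then obtain H where H: "H \<in> fgen W" "H \<subseteq> G" "x \<in> v_op W H"
      unfolding star_f_iff by blast
    obtain s0 where s0: "s0 \<in> H" "s0 \<noteq> 0" "\<forall>h\<in>H. h * inverse s0 \<in> W"
      using fgen_principal[OF H(1)] by blast
    \<comment> \<open>H is the principal module s0 W, so its v-closure is s0 W as well\<close>
    have "inverse s0 \<in> colon W H" unfolding colon_def using s0(3) by (simp add: mult.commute)
    then have "x * inverse s0 \<in> W" using H(3) unfolding v_op_def colon_def by blast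
    moreover have "s0 \<in> nonunits W" using s0(1) H(2) G(2) by blast
    ultimately have "(x * inverse s0) * s0 \<in> nonunits W" by (rule nonunits_mult)
    then show "x \<in> nonunits W" using s0(2) by (simp add: mult.assoc)
  qed
qed

lemma quasi_prime_nonunits_d_op:
  assumes "nonunits W \<noteq> {0}"
  shows "quasi_prime W (star_f W d_op) (nonunits W)"
  by (rule quasi_prime_nonunits[OF _ _ assms]) (auto simp: d_op_def)

end

section \<open>Chevalley's extension theorem\<close>

definition polys_deg :: "'a::field set \<Rightarrow> 'a \<Rightarrow> nat \<Rightarrow> 'a set" where
  "polys_deg I x n = {\<Sum>i\<le>n. a i * x ^ i | a. \<forall>i. a i \<in> I}"

definition polys :: "'a::field set \<Rightarrow> 'a \<Rightarrow> 'a set" where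
  "polys I x = (\<Union>n. polys_deg I x n)"

lemma polys_degI: "(\<And>i. a i \<in> I) \<Longrightarrow> y = (\<Sum>i\<le>n. a i * x ^ i) \<Longrightarrow> y \<in> polys_deg I x n"
  unfolding polys_deg_def by blast

lemma polys_degE:
  assumes "y \<in> polys_deg I x n"
  obtains a where "\<And>i. a i \<in> I" "y = (\<Sum>i\<le>n. a i * x ^ i)"
  using assms unfolding polys_deg_def by blast

lemma polys_deg_0: "polys_deg I x 0 = I"
proof
  show "polys_deg I x 0 \<subseteq> I" by (auto elim: polys_degE)
  show "I \<subseteq> polys_deg I x 0" by (auto intro: polys_degI[of "\<lambda>_. _"])
qed

lemma polys_deg_monom: "0 \<in> I \<Longrightarrow> c \<in> I \<Longrightarrow> c * x ^ n \<in> polys_deg I x n"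
proof (rule polys_degI[of "\<lambda>i. if i = n then c else 0"])
  have "(\<Sum>i\<le>n. (if i = n then c else 0) * x ^ i) = (\<Sum>i\<le>n. if i = n then c * x ^ i else 0)"
    by (rule sum.cong) auto
  then show "c * x ^ n = (\<Sum>i\<le>n. (if i = n then c else 0) * x ^ i)" by simp
qed auto

lemma polys_deg_mono_Suc: "0 \<in> I \<Longrightarrow> polys_deg I x k \<subseteq> polys_deg I x (Suc k)"
proof
  fix y assume I0: "0 \<in> I" and "y \<in> polys_deg I x k"
  from this(2) obtain a where a: "\<And>i. a i \<in> I" "y = (\<Sum>i\<le>k. a i * x ^ i)" by (rule polys_degE) blast
  define a' where "a' = a(Suc k := 0)"
  have "(\<Sum>i\<le>Suc k. a' i * x ^ i) = (\<Sum>i\<le>k. a' i * x ^ i)" by (simp add: a'_def)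
  also have "\<dots> = y" unfolding a(2) by (rule sum.cong) (auto simp: a'_def)
  finally show "y \<in> polys_deg I x (Suc k)" using a(1) I0 by (intro polys_degI[of a']) (auto simp: a'_def)
qed

lemma polys_deg_mono:
  assumes "0 \<in> I" "k \<le> k'"
  shows "polys_deg I x k \<subseteq> polys_deg I x k'"
  using assms(2) by (induction rule: dec_induct) (use polys_deg_mono_Suc[OF assms(1)] in blast)+

lemma polys_deg_add:
  assumes "submod W I" "y \<in> polys_deg I x k" "z \<in> polys_deg I x k"
  shows "y + z \<in> polys_deg I x k"
proof -
  obtain a where a: "\<And>i. a i \<in> I" "y = (\<Sum>i\<le>k. a i * x ^ i)" using assms(2) by (rule polys_degE) blast
  obtain b where b: "\<And>i. b i \<in> I" "z = (\<Sum>i\<le>k. b i * x ^ i)" using assms(3) by (rule polys_degE) blast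
  have "y + z = (\<Sum>i\<le>k. (a i + b i) * x ^ i)" unfolding a(2) b(2) by (simp add: sum.distrib distrib_right)
  then show ?thesis using submodD(2)[OF assms(1) a(1) b(1)] by (intro polys_degI) auto
qed

lemma polys_deg_scale:
  assumes "submod W I" "w \<in> W" "y \<in> polys_deg I x k"
  shows "w * y \<in> polys_deg I x k"
proof -
  obtain a where a: "\<And>i. a i \<in> I" "y = (\<Sum>i\<le>k. a i * x ^ i)" using assms(3) by (rule polys_degE) blast
  have "w * y = (\<Sum>i\<le>k. (w * a i) * x ^ i)" unfolding a(2) by (simp add: sum_distrib_left mult.assoc)
  then show ?thesis using submodD(3)[OF assms(1) assms(2) a(1)] by (intro polys_degI) auto
qed

lemma polys_deg_shift:
  assumes "0 \<in> I" "y \<in> polys_deg I x k"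
  shows "x * y \<in> polys_deg I x (Suc k)"
proof -
  obtain a where a: "\<And>i. a i \<in> I" "y = (\<Sum>i\<le>k. a i * x ^ i)" using assms(2) by (rule polys_degE) blast
  define a' where "a' = (\<lambda>i. case i of 0 \<Rightarrow> 0 | Suc j \<Rightarrow> a j)"
  have "(\<Sum>i\<le>Suc k. a' i * x ^ i) = a' 0 * x ^ 0 + (\<Sum>i\<le>k. a' (Suc i) * x ^ Suc i)"
    by (rule sum.atMost_Suc_shift)
  also have "\<dots> = x * y" unfolding a(2) by (simp add: a'_def sum_distrib_left mult.assoc mult.left_commute)
  finally show ?thesis using a(1) assms(1) by (intro polys_degI[of a']) (auto simp: a'_def split: nat.split)
qed

lemma polys_deg_Suc_top:
  assumes "y \<in> polys_deg I x (Suc k)"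
  obtains e c where "e \<in> polys_deg I x k" "c \<in> I" "y = e + c * x ^ Suc k"
proof -
  obtain a where a: "\<And>i. a i \<in> I" "y = (\<Sum>i\<le>Suc k. a i * x ^ i)" using assms by (rule polys_degE) blast
  have "y = (\<Sum>i\<le>k. a i * x ^ i) + a (Suc k) * x ^ Suc k" using a(2) by simp
  moreover have "(\<Sum>i\<le>k. a i * x ^ i) \<in> polys_deg I x k" using a(1) by (intro polys_degI) auto
  ultimately show thesis using that a(1) by blast
qed

lemma polys_deg_Suc_bot:
  assumes "y \<in> polys_deg I x (Suc k)"
  obtains c e where "c \<in> I" "e \<in> polys_deg I x k" "y = c + x * e"
proof -
  obtain a where a: "\<And>i. a i \<in> I" "y = (\<Sum>i\<le>Suc k. a i * x ^ i)" using assms by (rule polys_degE) blast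
  have "y = a 0 * x ^ 0 + (\<Sum>i\<le>k. a (Suc i) * x ^ Suc i)" unfolding a(2) by (rule sum.atMost_Suc_shift)
  also have "\<dots> = a 0 + x * (\<Sum>i\<le>k. a (Suc i) * x ^ i)"
    by (simp add: sum_distrib_left mult.assoc mult.left_commute)
  finally have "y = a 0 + x * (\<Sum>i\<le>k. a (Suc i) * x ^ i)" .
  moreover have "(\<Sum>i\<le>k. a (Suc i) * x ^ i) \<in> polys_deg I x k" using a(1) by (intro polys_degI) auto
  ultimately show thesis using that a(1) by blast
qed

lemma polys_deg_inverse:
  assumes "submod W I" "x \<noteq> 0" "y \<in> polys_deg I (inverse x) k"
  shows "x ^ k * y \<in> polys_deg I x k"
  using assms(3)
proof (induction k arbitrary: y)
  case 0 then show ?case by (simp add: polys_deg_0)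
next
  case (Suc k)
  have I0: "0 \<in> I" using submodD(1)[OF assms(1)] .
  obtain c e where ce: "c \<in> I" "e \<in> polys_deg I (inverse x) k" "y = c + inverse x * e"
    using Suc.prems by (rule polys_deg_Suc_bot)
  have "x ^ Suc k * y = c * x ^ Suc k + x ^ k * e" using assms(2) unfolding ce(3)
    by (simp add: algebra_simps)
  moreover have "c * x ^ Suc k \<in> polys_deg I x (Suc k)" by (rule polys_deg_monom[OF I0 ce(1)])
  moreover have "x ^ k * e \<in> polys_deg I x (Suc k)" using Suc.IH[OF ce(2)] polys_deg_mono_Suc[OF I0] by blast
  ultimately show ?case using polys_deg_add[OF assms(1)] by metis
qed

lemma polys_deg_subset:
  assumes "submod W I" "subring W" "z \<in> W"
  shows "polys_deg I z k \<subseteq> I"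
proof
  fix y assume "y \<in> polys_deg I z k"
  then obtain a where a: "\<And>i. a i \<in> I" "y = (\<Sum>i\<le>k. a i * z ^ i)" by (rule polys_degE) blast
  have "\<And>i. a i * z ^ i \<in> I" using submodD(3)[OF assms(1) subring_power[OF assms(2,3)] a(1)]
    by (simp add: mult.commute)
  then show "y \<in> I" unfolding a(2) by (rule submod_sum[OF assms(1)])
qed

definition adjoin :: "'a::field set \<Rightarrow> 'a \<Rightarrow> 'a set" where
  "adjoin W x = \<Inter>{R. subring R \<and> W \<subseteq> R \<and> x \<in> R}"

lemma subring_adjoin: "subring (adjoin W x)"
  unfolding adjoin_def by (rule subring_Inter) blast

lemma adjoin_sup: "W \<subseteq> adjoin W x" "x \<in> adjoin W x"
  unfolding adjoin_def by blast+

lemma adjoin_least: "subring R \<Longrightarrow> W \<subseteq> R \<Longrightarrow> x \<in> R \<Longrightarrow> adjoin W x \<subseteq> R"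
  unfolding adjoin_def by blast

lemma submod_polys:
  assumes W: "subring W" and I: "submod W I"
  shows "submod (adjoin W x) (polys I x)"
proof -
  have I0: "0 \<in> I" using submodD(1)[OF I] .
  have zero: "0 \<in> polys I x" using polys_deg_0 I0 unfolding polys_def by blast
  have add: "y + z \<in> polys I x" if yz: "y \<in> polys I x" "z \<in> polys I x" for y z
  proof -
    obtain k1 k2 where "y \<in> polys_deg I x k1" "z \<in> polys_deg I x k2" using yz unfolding polys_def by blast
    then have "y \<in> polys_deg I x (max k1 k2)" "z \<in> polys_deg I x (max k1 k2)"
      using polys_deg_mono[OF I0] by (meson max.cobounded1 max.cobounded2 subsetD)+
    then show ?thesis using polys_deg_add[OF I] unfolding polys_def by blast
  qed
  have "subring {r. \<forall>e\<in>polys I x. r * e \<in> polys I x}"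
  proof (rule subring_multipliers[OF zero add])
    fix y assume "y \<in> polys I x"
    then have "(- 1) * y \<in> polys I x"
      using polys_deg_scale[OF I subringD(4)[OF W subringD(2)[OF W]]] unfolding polys_def by blast
    then show "- y \<in> polys I x" by simp
  qed
  moreover have "W \<subseteq> {r. \<forall>e\<in>polys I x. r * e \<in> polys I x}"
    unfolding polys_def using polys_deg_scale[OF I] by blast
  moreover have "x \<in> {r. \<forall>e\<in>polys I x. r * e \<in> polys I x}"
    unfolding polys_def using polys_deg_shift[OF I0] by blast
  ultimately have "adjoin W x \<subseteq> {r. \<forall>e\<in>polys I x. r * e \<in> polys I x}" by (rule adjoin_least)
  then show ?thesis unfolding submod_def using zero add by blast
qed

lemma one_minus_power_in:
  assumes "subring W" "submod W I" "I \<subseteq> W" "y \<in> I"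
  shows "1 - (1 - y) ^ n \<in> I"
proof (induction n)
  case 0 then show ?case using submodD(1)[OF assms(2)] by simp
next
  case (Suc n)
  have "1 - y \<in> W" using subringD(2,6)[OF assms(1)] assms(3,4) by blast
  then have "(1 - y) ^ n * y \<in> I" using submodD(3)[OF assms(2) subring_power[OF assms(1)] assms(4)] by blast
  moreover have "1 - (1 - y) ^ Suc n = (1 - (1 - y) ^ n) + (1 - y) ^ n * y" by (simp add: algebra_simps)
  ultimately show ?case using submodD(2)[OF assms(2) Suc.IH] by metis
qed

text \<open>The hypotheses below hold for I = span W P when W is a subring maximal with
  1 \<notin> span W P.\<close>

context
  fixes W I :: "'a::field set"
  assumes W: "subring W" and I: "submod W I" "I \<subseteq> W" "1 \<notin> I"
    and one_in_polys: "\<And>z. z \<notin> W \<Longrightarrow> 1 \<in> polys I z"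
begin

lemma inverse_one_minus_in: "y \<in> I \<Longrightarrow> inverse (1 - y) \<in> W"
proof (rule ccontr)
  assume y: "y \<in> I" and nz: "inverse (1 - y) \<notin> W"
  have z0: "1 - y \<noteq> 0" using y I(3) by auto
  obtain n where n: "1 \<in> polys_deg I (inverse (1 - y)) n" using one_in_polys[OF nz] unfolding polys_def by blast
  have "1 - y \<in> W" using subringD(2,6)[OF W] I(2) y by blast
  then have "(1 - y) ^ n \<in> I"
    using polys_deg_inverse[OF I(1) z0 n] polys_deg_subset[OF I(1) W] by auto
  moreover have "1 - (1 - y) ^ n \<in> I" by (rule one_minus_power_in[OF W I(1,2) y])
  ultimately have "(1 - y) ^ n + (1 - (1 - y) ^ n) \<in> I" using submodD(2)[OF I(1)] by blast
  then show False using I(3) by simp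
qed

text \<open>The relation for inverse x, multiplied by a power of x, expresses x^n through lower
  powers because 1 - b is a unit of W for b \<in> I; this absorbs the top term of the relation for x.\<close>
lemma polys_deg_reduce:
  assumes x0: "x \<noteq> 0" and n: "1 \<in> polys_deg I x n" and m: "1 \<in> polys_deg I (inverse x) m"
    and mn: "m \<le> n"
  obtains k where "k < n" "1 \<in> polys_deg I x k"
proof -
  have I0: "0 \<in> I" using submodD(1)[OF I(1)] .
  obtain k where k: "n = Suc k" using n I(3) polys_deg_0 by (cases n) auto
  obtain l where l: "m = Suc l" using m I(3) polys_deg_0 by (cases m) auto
  obtain b0 e' where be: "b0 \<in> I" "e' \<in> polys_deg I (inverse x) l" "1 = b0 + inverse x * e'"
    using m l polys_deg_Suc_bot by metis
  have "e' \<in> polys_deg I (inverse x) k" using be(2) polys_deg_mono[OF I0, of l k] mn k l by auto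
  then have xe: "x ^ k * e' \<in> polys_deg I x k" by (rule polys_deg_inverse[OF I(1) x0])
  have b1: "1 - b0 \<noteq> 0" using be(1) I(3) by auto
  have "1 - b0 = inverse x * e'" using be(3) by (simp add: algebra_simps)
  then have "x ^ Suc k * (1 - b0) = x ^ k * e'" using x0 by (simp add: mult.assoc)
  then have "x ^ Suc k = inverse (1 - b0) * (x ^ k * e')" using b1 by (simp add: field_simps)
  moreover have "inverse (1 - b0) * (x ^ k * e') \<in> polys_deg I x k"
    by (rule polys_deg_scale[OF I(1) inverse_one_minus_in[OF be(1)] xe])
  ultimately have xs: "x ^ Suc k \<in> polys_deg I x k" by (simp only:)
  obtain e c where ec: "e \<in> polys_deg I x k" "c \<in> I" "1 = e + c * x ^ Suc k"
    using n k polys_deg_Suc_top by metis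
  have "c * x ^ Suc k \<in> polys_deg I x k" using polys_deg_scale[OF I(1) _ xs] ec(2) I(2) by blast
  then have "1 \<in> polys_deg I x k" using polys_deg_add[OF I(1) ec(1)] ec(3) by metis
  then show thesis using that k by blast
qed

lemma valuation_ring_if_one_in_polys: "valuation_ring W"
  unfolding valuation_ring_def
proof (intro conjI allI impI W)
  fix x :: 'a assume x0: "x \<noteq> 0"
  show "x \<in> W \<or> inverse x \<in> W"
  proof (rule ccontr)
    assume "\<not> (x \<in> W \<or> inverse x \<in> W)"
    then have "1 \<in> polys I x" "1 \<in> polys I (inverse x)" using one_in_polys by auto
    then obtain n0 m0 where n0: "1 \<in> polys_deg I x n0" and m0: "1 \<in> polys_deg I (inverse x) m0"
      unfolding polys_def by blast
    \<comment> \<open>descent on the smaller of the two minimal degrees\<close>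
    define n where "n = (LEAST n. 1 \<in> polys_deg I x n)"
    define m where "m = (LEAST m. 1 \<in> polys_deg I (inverse x) m)"
    have n: "1 \<in> polys_deg I x n" using n0 unfolding n_def by (rule LeastI)
    have m: "1 \<in> polys_deg I (inverse x) m" using m0 unfolding m_def by (rule LeastI)
    show False
    proof (cases "m \<le> n")
      case True
      then obtain k where "k < n" "1 \<in> polys_deg I x k" using polys_deg_reduce[OF x0 n m] by blast
      then show False unfolding n_def using not_less_Least by blast
    next
      case False
      have "inverse x \<noteq> 0" "1 \<in> polys_deg I (inverse (inverse x)) n" "n \<le> m" using x0 n False by auto
      then obtain k where "k < m" "1 \<in> polys_deg I (inverse x) k" using polys_deg_reduce m by blast
      then show False unfolding m_def using not_less_Least by blast
    qed
  qed
qed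

end

lemma span_chain_Union_subset:
  assumes "C \<noteq> {}" "subset.chain A C"
  shows "span (\<Union>C) P \<subseteq> (\<Union>R\<in>C. span R P)"
proof (rule span_minimal)
  obtain R0 where R0: "R0 \<in> C" using assms(1) by blast
  have chain: "\<And>R1 R2. R1 \<in> C \<Longrightarrow> R2 \<in> C \<Longrightarrow> R1 \<subseteq> R2 \<or> R2 \<subseteq> R1"
    using assms(2) unfolding subset_chain_def by blast
  show "P \<subseteq> (\<Union>R\<in>C. span R P)" using R0 span_superset[of P R0] by blast
  show "submod (\<Union>C) (\<Union>R\<in>C. span R P)" unfolding submod_def
  proof (intro conjI ballI)
    show "0 \<in> (\<Union>R\<in>C. span R P)" using R0 submodD(1)[OF submod_span[of R0 P]] by blast
  next
    fix x y assume "x \<in> (\<Union>R\<in>C. span R P)" "y \<in> (\<Union>R\<in>C. span R P)"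
    then obtain R1 R2 where R12: "R1 \<in> C" "R2 \<in> C" "x \<in> span R1 P" "y \<in> span R2 P" by blast
    then obtain R where R: "R \<in> C" "x \<in> span R P" "y \<in> span R P"
      using chain[OF R12(1,2)] span_mono_ring by blast
    then show "x + y \<in> (\<Union>R\<in>C. span R P)" using submodD(2)[OF submod_span] by blast
  next
    fix r x assume "r \<in> \<Union>C" "x \<in> (\<Union>R\<in>C. span R P)"
    then obtain R1 R2 where R12: "R1 \<in> C" "R2 \<in> C" "r \<in> R1" "x \<in> span R2 P" by blast
    then obtain R where R: "R \<in> C" "r \<in> R" "x \<in> span R P"
      using chain[OF R12(1,2)] span_mono_ring by blast
    then show "r * x \<in> (\<Union>R\<in>C. span R P)" using span_mult by blast
  qed
qed

lemma exists_maximal_subring_avoiding: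
  assumes "subring L" "1 \<notin> span L P"
  obtains W where "subring W" "L \<subseteq> W" "1 \<notin> span W P"
    "\<And>X. subring X \<Longrightarrow> W \<subseteq> X \<Longrightarrow> 1 \<notin> span X P \<Longrightarrow> X = W"
proof -
  define A where "A = {R. subring R \<and> L \<subseteq> R \<and> 1 \<notin> span R P}"
  have "\<exists>W\<in>A. \<forall>X\<in>A. W \<subseteq> X \<longrightarrow> X = W"
  proof (rule subset_Zorn_nonempty)
    show "A \<noteq> {}" using assms unfolding A_def by blast
  next
    fix C assume C: "C \<noteq> {}" "subset.chain A C"
    then have CA: "\<And>R. R \<in> C \<Longrightarrow> subring R \<and> L \<subseteq> R \<and> 1 \<notin> span R P"
      unfolding A_def subset_chain_def by blast
    have "subring (\<Union>C)" using subring_chain_Union[OF C] CA by blast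
    moreover have "L \<subseteq> \<Union>C" using CA C(1) by blast
    moreover have "1 \<notin> span (\<Union>C) P" using span_chain_Union_subset[OF C] CA by blast
    ultimately show "\<Union>C \<in> A" unfolding A_def by blast
  qed
  then obtain W where W: "W \<in> A" and max: "\<forall>X\<in>A. W \<subseteq> X \<longrightarrow> X = W" by blast
  show thesis
  proof (rule that)
    show "subring W" "L \<subseteq> W" "1 \<notin> span W P" using W unfolding A_def by blast+
    show "X = W" if X: "subring X" "W \<subseteq> X" "1 \<notin> span X P" for X
      using max W X unfolding A_def by blast
  qed
qed

theorem chevalley_valuation_ring:
  assumes L: "subring L" and P: "P \<subseteq> L" "1 \<notin> span L P"
  obtains W where "valuation_ring W" "L \<subseteq> W" "1 \<notin> span W P"
proof -
  obtain W where W: "subring W" "L \<subseteq> W" "1 \<notin> span W P"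
    and max: "\<And>X. subring X \<Longrightarrow> W \<subseteq> X \<Longrightarrow> 1 \<notin> span X P \<Longrightarrow> X = W"
    using exists_maximal_subring_avoiding[OF L P(2)] by blast
  let ?I = "span W P"
  have I: "submod W ?I" "?I \<subseteq> W"
    using submod_span span_minimal[OF subring_submod[OF W(1)]] P(1) W(2) by blast+
  have "1 \<in> polys ?I z" if z: "z \<notin> W" for z
  proof -
    have "adjoin W z \<noteq> W" using adjoin_sup(2)[of z W] z by blast
    then have "1 \<in> span (adjoin W z) P" using max[OF subring_adjoin adjoin_sup(1)] by blast
    moreover have "P \<subseteq> polys_deg ?I z 0" using span_superset[of P W] by (simp add: polys_deg_0)
    then have "P \<subseteq> polys ?I z" unfolding polys_def by blast
    then have "span (adjoin W z) P \<subseteq> polys ?I z" by (rule span_minimal[OF submod_polys[OF W(1) I(1)]])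
    ultimately show ?thesis by blast
  qed
  then have "valuation_ring W" using valuation_ring_if_one_in_polys[OF W(1) I W(3)] by blast
  then show thesis using that W(2,3) by blast
qed

section \<open>Linked overrings of a P*MD are flat\<close>

lemma one_notin_star_f_contraction:
  assumes ss: "semistar D st" and D: "subring D" and T: "overring D T"
    and lk: "linked D st T st'" and one: "1 \<in> st' T"
    and Q: "quasi_prime T (star_f T st') Q"
  shows "1 \<notin> star_f D st (Q \<inter> D)"
proof
  assume "1 \<in> star_f D st (Q \<inter> D)"
  then obtain G where G: "G \<in> fgen D" "G \<subseteq> Q \<inter> D" "1 \<in> st G" unfolding star_f_iff by blast
  have Ts: "subring T" and DT: "D \<subseteq> T" using overringD[OF T] by auto
  have "st G = st D" using semistar_eq_ring_if_one[OF ss D fgen_Fbar[OF G(1)]] G(2,3) by blast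
  then have "st' (span T G) = st' T" using lk G(1,2) unfolding linked_def by blast
  moreover have "span T G \<in> fgen T" by (rule fgen_ring_ext[OF DT G(1)])
  moreover have "span T G \<subseteq> Q"
    using span_minimal[OF ideal_ofD(2)[OF quasi_primeD(1)[OF Q]]] G(2) by blast
  ultimately have "1 \<in> star_f T st' Q" using one unfolding star_f_iff by metis
  then have "1 \<in> Q" using quasi_primeD(3)[OF Q] subringD(2)[OF Ts] by blast
  then show False using ideal_one[OF quasi_primeD(1)[OF Q]] quasi_primeD(4)[OF Q] by blast
qed

lemma exists_colon_elem_escaping:
  assumes PM: "PstarMD D st" and ss: "semistar D st" and D: "subring D"
    and p: "submod D p" "1 \<notin> star_f D st p"
    and F: "F \<in> fgen D" "F = span D S"
  shows "\<exists>s\<in>S. \<exists>y\<in>colon D F. s * y \<notin> p"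
proof (rule ccontr)
  assume "\<not> ?thesis"
  then have Sy: "\<And>s y. s \<in> S \<Longrightarrow> y \<in> colon D F \<Longrightarrow> s * y \<in> p" by blast
  let ?J = "span D {f * y | f y. f \<in> F \<and> y \<in> colon D F}"
  have "{f * y | f y. f \<in> F \<and> y \<in> colon D F} \<subseteq> p"
  proof clarify
    fix f y assume f: "f \<in> F" and y: "y \<in> colon D F"
    have "S \<subseteq> {f. f * y \<in> p}" using Sy y by blast
    then have "F \<subseteq> {f. f * y \<in> p}" unfolding F(2)
      by (rule span_minimal[OF submod_multiplier_preimage[OF p(1)]])
    then show "f * y \<in> p" using f by blast
  qed
  then have "?J \<subseteq> p" by (rule span_minimal[OF p(1)])
  moreover have "1 \<in> star_f D st ?J"
    using PM F(1) one_in_semistar_ring[OF ss D] unfolding PstarMD_def by blast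
  ultimately show False using p(2) star_f_mono by blast
qed

lemma loc_valuation_if_PstarMD:
  assumes Dq: "domain_qf D" and ss: "semistar D st" and PM: "PstarMD D st"
    and p: "submod D p" "1 \<notin> star_f D st p" and x0: "x \<noteq> 0"
  shows "x \<in> loc D (D - p) \<or> inverse x \<in> loc D (D - p)"
proof -
  have D: "subring D" using domain_qfD(1)[OF Dq] .
  obtain a b where ab: "a \<in> D" "b \<in> D" "b \<noteq> 0" "x = a / b" using domain_qfD(2)[OF Dq, of x] by blast
  have a0: "a \<noteq> 0" using ab x0 by auto
  have "span D {a, b} \<in> fgen D" by (rule fgen_span[of _ a]) (use a0 in auto)
  then obtain s y where s: "s \<in> {a, b}" and y: "y \<in> colon D (span D {a, b})" "s * y \<notin> p"
    using exists_colon_elem_escaping[OF PM ss D p] by blast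
  have "a \<in> span D {a, b}" "b \<in> span D {a, b}" using span_superset by blast+
  then have ayD: "a * y \<in> D" and byD: "b * y \<in> D" using colonD[OF y(1)] by (simp_all add: mult.commute)
  have y0: "y \<noteq> 0" using y(2) submodD(1)[OF p(1)] by auto
  have x_eq: "x = (a * y) / (b * y)" and ix_eq: "inverse x = (b * y) / (a * y)"
    using ab a0 y0 by simp_all
  consider "a * y \<in> D - p" | "b * y \<in> D - p" using s y(2) ayD byD by blast
  then show ?thesis
  proof cases
    case 1
    then have "(b * y) / (a * y) \<in> loc D (D - p)" by (rule locI[OF byD])
    then show ?thesis using ix_eq by metis
  next
    case 2
    then have "(a * y) / (b * y) \<in> loc D (D - p)" by (rule locI[OF ayD])
    then show ?thesis using x_eq by metis
  qed
qed

lemma in_loc_contraction_if_inverse: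
  assumes DT: "D \<subseteq> T" and T: "subring T" and Q: "prime_ideal T Q"
    and ts: "t \<in> T" "s \<in> T - Q" "t \<noteq> 0"
    and inv: "inverse (t / s) \<in> loc D (D - Q \<inter> D)"
  shows "t / s \<in> loc D (D - Q \<inter> D)"
proof -
  obtain c e where ce: "c \<in> D" "e \<in> D - Q \<inter> D" "inverse (t / s) = c / e" using inv by (rule locE)
  have c: "c \<notin> Q"
  proof
    assume "c \<in> Q"
    \<comment> \<open>s/t = c/e with c \<in> Q would force s or e into Q\<close>
    have "e \<noteq> 0" using ce(2) zero_in_prime_ideal[OF T Q] by auto
    then have "s * e = c * t" using ts(3) ce(3) by (simp add: frac_eq_eq)
    moreover have "c * t \<in> Q" using submodD(3)[OF prime_ideal_submod[OF T Q] ts(1) \<open>c \<in> Q\<close>]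
      by (simp add: mult.commute)
    ultimately have "s * e \<in> Q" by simp
    then show False using prime_idealD[OF T Q] ts(2) ce(2) DT by blast
  qed
  then have "c \<noteq> 0" using zero_in_prime_ideal[OF T Q] by auto
  then have "t / s = e / c" using ce(3) by (metis inverse_divide inverse_inverse_eq)
  then show ?thesis using locI[of e D c] ce c by auto
qed

lemma loc_contraction_eq:
  assumes D: "subring D" and T: "overring D T" and Q: "prime_ideal T Q"
    and val: "\<And>x. x \<noteq> 0 \<Longrightarrow> x \<in> loc D (D - Q \<inter> D) \<or> inverse x \<in> loc D (D - Q \<inter> D)"
  shows "loc D (D - Q \<inter> D) = loc T (T - Q)"
proof
  have Ts: "subring T" and DT: "D \<subseteq> T" using overringD[OF T] by auto
  show "loc D (D - Q \<inter> D) \<subseteq> loc T (T - Q)" by (rule loc_mono) (use DT in auto)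
  show "loc T (T - Q) \<subseteq> loc D (D - Q \<inter> D)"
  proof
    fix z assume "z \<in> loc T (T - Q)"
    then obtain t s where ts: "t \<in> T" "s \<in> T - Q" "z = t / s" by (rule locE)
    show "z \<in> loc D (D - Q \<inter> D)"
    proof (cases "t = 0")
      case True
      have "1 \<in> D - Q \<inter> D" using one_in_compl_prime[OF Ts Q] subringD(2)[OF D] by blast
      then have "0 / 1 \<in> loc D (D - Q \<inter> D)" by (rule locI[OF subringD(1)[OF D]])
      then show ?thesis using True ts(3) by simp
    next
      case False
      then have "z \<noteq> 0" using ts compl_prime_nonzero[OF Ts Q] by simp
      then show ?thesis
        using val in_loc_contraction_if_inverse[OF DT Ts Q ts(1,2) False] ts(3) by blast
    qed
  qed
qed

theorem flat_if_PstarMD: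
  assumes Dq: "domain_qf D" and ss: "semistar D st" and PM: "PstarMD D st"
    and T: "overring D T" and lk: "linked D st T st'" and one: "1 \<in> st' T"
  shows "flat D st T st'"
  unfolding flat_def
proof (intro conjI allI impI lk)
  fix Q assume Q: "quasi_prime T (star_f T st') Q"
  have D: "subring D" using domain_qfD(1)[OF Dq] .
  have "submod D (Q \<inter> D)" using submod_Int[OF submod_mono_ring[OF ideal_ofD(2)[OF quasi_primeD(1)[OF Q]]]
    subring_submod[OF D]] overringD(2)[OF T] by blast
  moreover have "1 \<notin> star_f D st (Q \<inter> D)" by (rule one_notin_star_f_contraction[OF ss D T lk one Q])
  ultimately show "loc D (D - Q \<inter> D) = loc T (T - Q)"
    using loc_contraction_eq[OF D T quasi_prime_imp_prime_ideal[OF Q]] loc_valuation_if_PstarMD[OF Dq ss PM]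
    by blast
qed

section \<open>Flat overrings make D a P*MD\<close>

lemma exists_common_denominator:
  assumes D: "subring D" and M: "1 \<in> M" "\<And>a b. a \<in> M \<Longrightarrow> b \<in> M \<Longrightarrow> a * b \<in> M" "M \<subseteq> D" "0 \<notin> M"
    and S: "finite S" "\<And>s. s \<in> S \<Longrightarrow> \<exists>d\<in>D. \<exists>c\<in>M. s = d / c"
  shows "\<exists>c\<in>M. \<forall>s\<in>S. s * c \<in> D"
  using S
proof (induction S rule: finite_induct)
  case empty then show ?case using M(1) by blast
next
  case (insert x S)
  then obtain c1 where c1: "c1 \<in> M" "\<forall>s\<in>S. s * c1 \<in> D" by auto
  obtain d c2 where dc: "d \<in> D" "c2 \<in> M" "x = d / c2" using insert.prems by blast
  have "x * (c1 * c2) = d * c1" using dc M(4) by (auto simp: field_simps)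
  moreover have "d * c1 \<in> D" using subringD(5)[OF D dc(1)] c1(1) M(3) by blast
  ultimately have "x * (c1 * c2) \<in> D" by metis
  moreover have "\<forall>s\<in>S. s * (c1 * c2) \<in> D"
    using c1(2) subringD(5)[OF D] dc(2) M(3) by (auto simp: mult.assoc[symmetric])
  ultimately show ?case using M(2)[OF c1(1) dc(2)] by blast
qed

lemma exists_nonzero_colon:
  assumes Dq: "domain_qf D" and S: "finite S"
  shows "\<exists>c\<in>colon D (span D S). c \<noteq> 0"
proof -
  have D: "subring D" using domain_qfD(1)[OF Dq] .
  have "\<exists>c\<in>D - {0}. \<forall>s\<in>S. s * c \<in> D"
  proof (rule exists_common_denominator[OF D _ _ _ _ S])
    show "\<exists>d\<in>D. \<exists>c\<in>D - {0}. s = d / c" for s using domain_qfD(2)[OF Dq, of s] by blast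
  qed (use subringD(2,5)[OF D] in auto)
  then show ?thesis using colon_spanI[OF D] by (metis DiffE insertI1 mult.commute)
qed

lemma exists_colon_elem_outside_prime:
  assumes Dq: "domain_qf D" and P: "prime_ideal D P" and V: "valuation_ring (loc D (D - P))"
    and S: "finite S" "s1 \<in> S" "s1 \<noteq> 0"
  shows "\<exists>s0\<in>S. \<exists>y\<in>colon D (span D S). s0 * y \<notin> P"
proof -
  have D: "subring D" using domain_qfD(1)[OF Dq] .
  obtain s0 where s0: "s0 \<in> S - {0}" "\<forall>s\<in>S - {0}. s * inverse s0 \<in> loc D (D - P)"
    using valuation_ring_finite_max[OF V, of "S - {0}"] S by blast
  \<comment> \<open>s0 has least value at P; clearing the denominators of the s / s0 gives y = e / s0\<close>
  have "\<exists>e\<in>D - P. \<forall>s\<in>(\<lambda>s. s * inverse s0) ` (S - {0}). s * e \<in> D"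
  proof (rule exists_common_denominator[OF D])
    show "\<And>s. s \<in> (\<lambda>s. s * inverse s0) ` (S - {0}) \<Longrightarrow> \<exists>d\<in>D. \<exists>c\<in>D - P. s = d / c"
      using s0(2) unfolding loc_def by blast
  qed (use one_in_compl_prime[OF D P] compl_prime_mult[OF D P] zero_in_prime_ideal[OF D P] S(1) in auto)
  then obtain e where e: "e \<in> D - P" "\<And>s. s \<in> S - {0} \<Longrightarrow> s * inverse s0 * e \<in> D" by blast
  let ?y = "e * inverse s0"
  have "?y * s \<in> D" if "s \<in> S" for s
    using e(2)[of s] that subringD(1)[OF D] by (cases "s = 0") (auto simp: ac_simps)
  then have "?y \<in> colon D (span D S)" by (rule colon_spanI[OF D])
  moreover have "s0 * ?y = e" using s0(1) by simp
  ultimately show ?thesis using s0(1) e(1) by (metis DiffD1 DiffD2)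
qed

theorem PstarMD_if_loc_valuation_rings:
  assumes Dq: "domain_qf D" and ss: "semistar D st"
    and V: "\<And>P. quasi_prime D (star_f D st) P \<Longrightarrow> valuation_ring (loc D (D - P))"
  shows "PstarMD D st"
  unfolding PstarMD_def
proof
  fix F assume F: "F \<in> fgen D"
  have D: "subring D" using domain_qfD(1)[OF Dq] .
  obtain S where S: "finite S" "F = span D S" "F \<noteq> {0}" using F by (rule fgenE)
  obtain s1 where s1: "s1 \<in> S" "s1 \<noteq> 0" using S(2,3) span_zero_set by blast
  let ?FF = "{f * y | f y. f \<in> F \<and> y \<in> colon D F}"
  have FF: "f * y \<in> span D ?FF" if "f \<in> F" "y \<in> colon D F" for f y
  proof (rule subsetD[OF span_superset])
    show "f * y \<in> ?FF" using that by blast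
  qed
  have "?FF \<subseteq> D" using colonD by (fastforce simp: mult.commute)
  then have JD: "span D ?FF \<subseteq> D" by (rule span_minimal[OF subring_submod[OF D]])
  show "star_f D st (span D ?FF) = st D"
  proof (rule star_f_eq_if_one[OF ss D JD], rule ccontr)
    assume one: "1 \<notin> star_f D st (span D ?FF)"
    obtain c where c: "c \<in> colon D F" "c \<noteq> 0" using exists_nonzero_colon[OF Dq S(1)] S(2) by blast
    have "s1 \<in> F" using s1(1) S(2) span_superset by blast
    then have "s1 * c \<in> span D ?FF" "s1 * c \<noteq> 0" using FF c s1(2) by auto
    moreover have "ideal_of D (span D ?FF)" unfolding ideal_of_def using JD submod_span by blast
    ultimately obtain P where P: "quasi_prime D (star_f D st) P" "span D ?FF \<subseteq> P"
      using exists_quasi_prime[OF D ss _ _ _ one] by blast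
    obtain s0 y where "s0 \<in> S" "y \<in> colon D F" "s0 * y \<notin> P"
      using exists_colon_elem_outside_prime[OF Dq quasi_prime_imp_prime_ideal[OF P(1)] V[OF P(1)] S(1) s1]
        S(2) by blast
    moreover have "s0 \<in> F" using \<open>s0 \<in> S\<close> S(2) span_superset by blast
    ultimately show False using FF P(2) by blast
  qed
qed

lemma fgen_not_subset_quasi_prime:
  assumes ss: "semistar D st" and D: "subring D" and P: "quasi_prime D (star_f D st) P"
    and F: "F \<in> fgen D" "F \<subseteq> D" "st F = st D"
  obtains f where "f \<in> F" "f \<notin> P"
proof (rule ccontr)
  assume "\<not> thesis"
  then have "F \<subseteq> P" using that by blast
  moreover have "1 \<in> st F" using F(3) one_in_semistar_ring[OF ss D] by simp
  ultimately have "1 \<in> star_f D st P" using F(1) unfolding star_f_iff by blast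
  then have "1 \<in> P" using quasi_primeD(3)[OF P] subringD(2)[OF D] by blast
  then show False using ideal_one[OF quasi_primeD(1)[OF P]] quasi_primeD(4)[OF P] by blast
qed

lemma linked_if_dominates_loc:
  assumes ss: "semistar D st" and D: "subring D" and P: "quasi_prime D (star_f D st) P"
    and W: "subring W" "loc D (D - P) \<subseteq> W"
  shows "linked D st W st'"
  unfolding linked_def
proof (intro allI impI)
  fix F assume F: "F \<in> fgen D \<and> F \<subseteq> D \<and> st F = st D"
  obtain f where f: "f \<in> F" "f \<notin> P" using fgen_not_subset_quasi_prime[OF ss D P] F by blast
  have pI: "prime_ideal D P" using quasi_prime_imp_prime_ideal[OF P] .
  have DW: "D \<subseteq> W" using subset_loc[OF D pI] W(2) by blast
  have "f \<in> D - P" using f F by blast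
  then have "inverse f \<in> W" "f \<noteq> 0"
    using inverse_in_loc[OF D pI D] compl_prime_nonzero[OF D pI] W(2) by blast+
  then have "inverse f * f \<in> span W F" using span_mult span_superset f(1) by blast
  then have "1 \<in> span W F" using \<open>f \<noteq> 0\<close> by simp
  then have "W \<subseteq> span W F" by (rule one_in_submod_imp_ring_subset[OF submod_span])
  moreover have "span W F \<subseteq> W" using span_minimal[OF subring_submod[OF W(1)]] F DW by blast
  ultimately show "st' (span W F) = st' W" by (simp add: subset_antisym)
qed

lemma nonunits_contraction:
  assumes D: "subring D" and P: "prime_ideal D P"
    and W: "valuation_ring W" "loc D (D - P) \<subseteq> W" "1 \<notin> span W P"
  shows "nonunits W \<inter> D = P"
proof
  have DW: "D \<subseteq> W" using subset_loc[OF D P] W(2) by blast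
  show "P \<subseteq> nonunits W \<inter> D"
  proof
    fix p assume p: "p \<in> P"
    then have pW: "p \<in> D" "p \<in> W" using prime_ideal_sub[OF D P] DW by blast+
    have "p \<in> nonunits W"
    proof (rule ccontr)
      assume "p \<notin> nonunits W"
      then have "p \<noteq> 0" "inverse p \<in> W" using pW unfolding nonunits_def by auto
      then have "inverse p * p \<in> span W P" using span_mult span_superset p by blast
      then show False using W(3) \<open>p \<noteq> 0\<close> by simp
    qed
    then show "p \<in> nonunits W \<inter> D" using pW by blast
  qed
  show "nonunits W \<inter> D \<subseteq> P"
  proof (rule ccontr)
    assume "\<not> nonunits W \<inter> D \<subseteq> P"
    then obtain d where d: "d \<in> nonunits W" "d \<in> D - P" by blast
    then have "d \<noteq> 0" "inverse d \<in> W"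
      using compl_prime_nonzero[OF D P] inverse_in_loc[OF D P D] W(2) by blast+
    then show False using d(1) unfolding nonunits_def by auto
  qed
qed

lemma loc_valuation_ring_if_flat:
  fixes op :: "'a::field set \<Rightarrow> 'a set \<Rightarrow> 'a set"
  assumes Dq: "domain_qf D" and ss: "semistar D st"
    and flat: "\<And>T. overring D T \<Longrightarrow> linked D st T (op T) \<Longrightarrow> flat D st T (op T)"
    and quasi: "\<And>W P. valuation_ring W \<Longrightarrow> quasi_prime D (star_f D st) P \<Longrightarrow> loc D (D - P) \<subseteq> W
      \<Longrightarrow> nonunits W \<noteq> {0} \<Longrightarrow> quasi_prime W (star_f W (op W)) (nonunits W)"
    and P: "quasi_prime D (star_f D st) P"
  shows "valuation_ring (loc D (D - P))"
proof -
  have D: "subring D" using domain_qfD(1)[OF Dq] .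
  have pI: "prime_ideal D P" using quasi_prime_imp_prime_ideal[OF P] .
  have "P \<subseteq> loc D (D - P)" using prime_ideal_sub[OF D pI] subset_loc[OF D pI] by blast
  then obtain W where W: "valuation_ring W" "loc D (D - P) \<subseteq> W" "1 \<notin> span W P"
    using chevalley_valuation_ring[OF loc_subring[OF D pI] _ one_notin_span_loc[OF D pI]] by blast
  have Ws: "subring W" using valuation_ringD(1)[OF W(1)] .
  have contr: "nonunits W \<inter> D = P" by (rule nonunits_contraction[OF D pI W])
  have "overring D W" unfolding overring_def using Ws W(2) subset_loc[OF D pI] by blast
  then have "flat D st W (op W)" using flat linked_if_dominates_loc[OF ss D P Ws W(2)] by blast
  moreover have "nonunits W \<noteq> {0}" using contr quasi_primeD(2)[OF P] zero_in_prime_ideal[OF D pI] by blast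
  then have "quasi_prime W (star_f W (op W)) (nonunits W)" using quasi[OF W(1) P W(2)] by blast
  ultimately have "loc D (D - P) = loc W (W - nonunits W)" using contr unfolding flat_def by metis
  then have "loc D (D - P) = W" using W(2) subset_loc_nonunits[OF W(1)] by blast
  then show ?thesis using W(1) by simp
qed

section \<open>The operations d, t and ell on overrings\<close>

lemma one_in_d_op_ring: "subring T \<Longrightarrow> 1 \<in> d_op T"
  unfolding d_op_def by (rule subringD(2))

lemma one_in_ell_ring: "subring T \<Longrightarrow> 1 \<in> ell D st T T"
  unfolding ell_def using span_superset subringD(2) by blast

lemma one_in_t_op_ring:
  assumes T: "subring T"
  shows "1 \<in> t_op T T"
proof -
  have "span T {1} \<in> fgen T" by (rule fgen_single) simp
  moreover have "span T {1} \<subseteq> T" using span_minimal[OF subring_submod[OF T]] subringD(2)[OF T] by blast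
  moreover have "1 \<in> v_op T (span T {1})" using v_op_extensive span_superset by blast
  ultimately show ?thesis unfolding t_op_def star_f_iff by blast
qed

lemma linked_ell:
  assumes ss: "semistar D st" and D: "subring D" and T: "overring D T"
  shows "linked D st T (ell D st T)"
  unfolding linked_def
proof (intro allI impI)
  fix F assume F: "F \<in> fgen D \<and> F \<subseteq> D \<and> st F = st D"
  have Ts: "subring T" and DT: "D \<subseteq> T" using overringD[OF T] by auto
  have "span (loc T (D - P)) (span T F) = span (loc T (D - P)) T"
    if P: "quasi_prime D (star_f D st) P" for P
  proof -
    let ?R = "loc T (D - P)"
    have pI: "prime_ideal D P" using quasi_prime_imp_prime_ideal[OF P] .
    obtain f where f: "f \<in> F" "f \<notin> P" using fgen_not_subset_quasi_prime[OF ss D P] F by blast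
    have fS: "f \<in> D - P" using f F by blast
    have FT: "span T F \<subseteq> T" using span_minimal[OF subring_submod[OF Ts]] F DT by blast
    have "f \<in> span ?R (span T F)" using f(1) span_superset by blast
    then have "inverse f * f \<in> span ?R (span T F)" using span_mult inverse_in_loc[OF D pI Ts fS] by blast
    then have "1 \<in> span ?R (span T F)" using compl_prime_nonzero[OF D pI fS] by simp
    then have "?R \<subseteq> span ?R (span T F)" by (rule one_in_submod_imp_ring_subset[OF submod_span])
    then have "T \<subseteq> span ?R (span T F)" using subset_loc[OF D pI] by blast
    then show ?thesis using span_mono[OF FT] span_minimal[OF submod_span] by blast
  qed
  then show "ell D st T (span T F) = ell D st T T" unfolding ell_def by (metis (no_types, lifting))
qed

lemma quasi_prime_nonunits_ell:
  assumes D: "subring D" and W1: "valuation_ring W" and P: "quasi_prime D (star_f D st) P"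
    and W: "loc D (D - P) \<subseteq> W" "nonunits W \<noteq> {0}"
  shows "quasi_prime W (star_f W (ell D st W)) (nonunits W)"
proof (rule quasi_prime_nonunits[OF W1 _ _ W(2)])
  fix G assume "G \<in> fgen W"
  show "G \<subseteq> ell D st W G" unfolding ell_def using span_superset by blast
next
  fix G assume G: "G \<in> fgen W" "G \<subseteq> nonunits W"
  have pI: "prime_ideal D P" using quasi_prime_imp_prime_ideal[OF P] .
  have Ws: "subring W" using valuation_ringD(1)[OF W1] .
  have "loc W (D - P) \<subseteq> W"
  proof
    fix z assume "z \<in> loc W (D - P)"
    then obtain a s where as: "a \<in> W" "s \<in> D - P" "z = a / s" by (rule locE)
    have "inverse s \<in> W" using inverse_in_loc[OF D pI D as(2)] W(1) by blast
    then show "z \<in> W" using subringD(5)[OF Ws as(1)] as(3) by (simp add: divide_inverse)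
  qed
  then have "submod (loc W (D - P)) G" using G(1) submod_mono_ring unfolding fgen_def Fbar_def by blast
  then have "span (loc W (D - P)) G \<subseteq> G" by (rule span_minimal) simp
  moreover have "ell D st W G \<subseteq> span (loc W (D - P)) G" unfolding ell_def using P by blast
  ultimately show "ell D st W G \<inter> W \<subseteq> nonunits W" using G(2) by blast
qed

lemma PstarMD_iff_linked_overrings_flat:
  fixes op :: "'a::field set \<Rightarrow> 'a set \<Rightarrow> 'a set"
  assumes Dq: "domain_qf D" and ss: "semistar D st"
    and one: "\<And>T. subring T \<Longrightarrow> 1 \<in> op T T"
    and quasi: "\<And>W P. valuation_ring W \<Longrightarrow> quasi_prime D (star_f D st) P \<Longrightarrow> loc D (D - P) \<subseteq> W
      \<Longrightarrow> nonunits W \<noteq> {0} \<Longrightarrow> quasi_prime W (star_f W (op W)) (nonunits W)"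
  shows "PstarMD D st \<longleftrightarrow> (\<forall>T. overring D T \<and> linked D st T (op T) \<longrightarrow> flat D st T (op T))"
proof
  assume "PstarMD D st"
  then show "\<forall>T. overring D T \<and> linked D st T (op T) \<longrightarrow> flat D st T (op T)"
    using flat_if_PstarMD[OF Dq ss] one overringD(1) by blast
next
  assume flat: "\<forall>T. overring D T \<and> linked D st T (op T) \<longrightarrow> flat D st T (op T)"
  have "valuation_ring (loc D (D - P))" if "quasi_prime D (star_f D st) P" for P
    by (rule loc_valuation_ring_if_flat[OF Dq ss _ quasi that]) (use flat in blast)
  then show "PstarMD D st" by (rule PstarMD_if_loc_valuation_rings[OF Dq ss])
qed

theorem theorem5p7:
  fixes D :: "'a::field set" and st :: "'a set \<Rightarrow> 'a set"
  assumes "domain_qf D" and "semistar D st"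
  shows "(PstarMD D st \<longleftrightarrow>
            (\<forall>T st'. overring D T \<and> semistar T st' \<and> linked D st T st' \<longrightarrow> flat D st T st'))
       \<and> (PstarMD D st \<longleftrightarrow> (\<forall>T. overring D T \<longrightarrow> flat D st T (ell D st T)))
       \<and> (PstarMD D st \<longleftrightarrow>
            (\<forall>T. overring D T \<and> linked D st T (t_op T) \<longrightarrow> flat D st T (t_op T)))
       \<and> (PstarMD D st \<longleftrightarrow>
            (\<forall>T. overring D T \<and> linked D st T d_op \<longrightarrow> flat D st T d_op))"
proof -
  have D: "subring D" using domain_qfD(1)[OF assms(1)] .
  have t: "PstarMD D st \<longleftrightarrow> (\<forall>T. overring D T \<and> linked D st T (t_op T) \<longrightarrow> flat D st T (t_op T))"
    using PstarMD_iff_linked_overrings_flat[where op = t_op, OF assms one_in_t_op_ring] quasi_prime_nonunits_t_op by blast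
  have d: "PstarMD D st \<longleftrightarrow> (\<forall>T. overring D T \<and> linked D st T d_op \<longrightarrow> flat D st T d_op)"
    using PstarMD_iff_linked_overrings_flat[where op = "\<lambda>_. d_op", OF assms one_in_d_op_ring]
      quasi_prime_nonunits_d_op by blast
  have ell: "PstarMD D st \<longleftrightarrow> (\<forall>T. overring D T \<longrightarrow> flat D st T (ell D st T))"
    using PstarMD_iff_linked_overrings_flat[where op = "ell D st", OF assms one_in_ell_ring]
      quasi_prime_nonunits_ell[OF D] linked_ell[OF assms(2) D] by blast
  have semistar: "PstarMD D st \<longleftrightarrow>
      (\<forall>T st'. overring D T \<and> semistar T st' \<and> linked D st T st' \<longrightarrow> flat D st T st')"
    using flat_if_PstarMD[OF assms] one_in_semistar_ring overringD(1) d semistar_d_op by blast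
  show ?thesis using semistar ell t d by blast
qed

end
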